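(* Let $\overline{\mathcal{O}}$, $\varphi$ be as in the context, let $K$ be a complete non-Archimedean field, and let $F:\overline{\mathcal{O}}\to K$ be a continuous non-vanishing function. Suppose that for all $n\in\mathbb{N}$ and all $\mathbf{x}=(\mathbf{x}_t)_t\in\overline{\mathcal{O}}$ with $|\mathbf{x}_t|<1$ for all $t$, $$\varphi^{(n)}(-\mathbf{x})=-\mathbf{x}\ \Longrightarrow\ \prod_{j=0}^{n-1}F\left(-\varphi^{(j)}(-\mathbf{x})\right)=1.$$ Then there exists a continuous non-vanishing function $G:\overline{\mathcal{O}}\to K$ such that $F(\mathbf{x})=\dfrac{G(\mathbf{x})}{G(-\varphi(-\mathbf{x}))}$ for all $\mathbf{x}\in\overline{\mathcal{O}}$.
   Context: Let $q$ be a prime power, $A=\mathbb{F}_q[\theta]$, $k=\mathbb{F}_q(\theta)$. Let $\mathcal{O}=\prod_t\mathcal{O}_t$ be a finite product with each $\mathcal{O}_t\in\{\mathbb{Z},A\}$; for each $t$ fix a prime number $p_t$ (if $\mathcal{O}_t=\mathbb{Z}$, with $\overline{\mathcal{O}}_t=\mathbb{Z}_{p_t}$) or a monic irreducible $v_t\in A$ (if $\mathcal{O}_t=A$, with $\overline{\mathcal{O}}_t=A_{v_t}$ the $v_t$-adic completion), and $\overline{\mathcal{O}}=\prod_t\overline{\mathcal{O}}_t$. Fix $\pi_t$ a positive power of $p_t$ resp. $v_t$. Each $\mathbf{x}_t\in\overline{\mathcal{O}}_t$ is uniquely $\sum_{i\ge0}x_{t,i}\pi_t^i$ with integer digits $0\le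 x_{t,i}<\pi_t$ (case $\mathbb{Z}$) or polynomial digits of degree $<\deg\pi_t$ (case $A$); $\varphi_t(\mathbf{x}_t)=\sum_{i\ge0}x_{t,i+1}\pi_t^i$ and $\varphi(\mathbf{x})=(\varphi_t(\mathbf{x}_t))_t$; $\varphi^{(j)}$ is the $j$-fold iterate. If $\varphi^{(n)}(\mathbf{y})=\mathbf{y}$ then each component $\mathbf{y}_t$ is an element of $\mathbb{Q}$ resp. $k$ (a ratio of an element of $\mathcal{O}_t$ and $1-\pi_t^n$); here $|\cdot|$ denotes the usual real absolute value on $\mathbb{Q}$ and the $\infty$-adic absolute value $|f/g|=q^{\deg f-\deg g}$ on $k$. *)

theory Defs
  imports "HOL-Computational_Algebra.Computational_Algebra"
begin

definition nonarch_abs :: "('k::field \<Rightarrow> real) \<Rightarrow> bool" where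
  "nonarch_abs abv \<longleftrightarrow>
     (\<forall>x. 0 \<le> abv x) \<and> (\<forall>x. abv x = 0 \<longleftrightarrow> x = 0) \<and>
     (\<forall>x y. abv (x * y) = abv x * abv y) \<and>
     (\<forall>x y. abv (x + y) \<le> max (abv x) (abv y))"

definition abv_complete :: "('k::field \<Rightarrow> real) \<Rightarrow> bool" where
  "abv_complete abv \<longleftrightarrow>
     (\<forall>s::nat \<Rightarrow> 'k.
        (\<forall>\<epsilon>>0. \<exists>N. \<forall>m\<ge>N. \<forall>n\<ge>N. abv (s m - s n) < \<epsilon>) \<longrightarrow>
        (\<exists>L. \<forall>\<epsilon>>0. \<exists>N. \<forall>n\<ge>N. abv (s n - L) < \<epsilon>))"

definition complete_nonarch_field :: "('k::field \<Rightarrow> real) \<Rightarrow> bool" where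
  "complete_nonarch_field abv \<longleftrightarrow> nonarch_abs abv \<and> abv_complete abv"

text \<open>An element of the pi-adic completion of R (R = int or F_q[theta]) is
  represented by the sequence of its truncations x n = sum of the first n digits,
  i.e. the canonical residue of x modulo pi^n (0 <= x n < pi^n for int,
  degree x n < n * degree pi for polynomials).\<close>

definition adic_elems :: "'a::euclidean_ring \<Rightarrow> (nat \<Rightarrow> 'a) set" where
  "adic_elems \<pi> = {x. \<forall>n. x n mod \<pi> ^ n = x n \<and> x (Suc n) mod \<pi> ^ n = x n}"

definition adic_neg :: "'a::euclidean_ring \<Rightarrow> (nat \<Rightarrow> 'a) \<Rightarrow> (nat \<Rightarrow> 'a)" where
  "adic_neg \<pi> x = (\<lambda>n. (- x n) mod \<pi> ^ n)"

text \<open>The digit shift: sum x_i pi^i maps to sum x_(i+1) pi^i.\<close>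
definition adic_shift :: "'a::euclidean_ring \<Rightarrow> (nat \<Rightarrow> 'a) \<Rightarrow> (nat \<Rightarrow> 'a)" where
  "adic_shift \<pi> x = (\<lambda>n. x (Suc n) div \<pi>)"

text \<open>Real absolute value on Q (for a/b) and infinity-adic absolute value on k (for a/b).\<close>
definition rat_abs :: "int \<Rightarrow> int \<Rightarrow> real" where
  "rat_abs a b = \<bar>real_of_int a / real_of_int b\<bar>"

definition kinf_abs :: "'f::{finite,field} poly \<Rightarrow> 'f poly \<Rightarrow> real" where
  "kinf_abs a b = (if a = 0 then 0
      else real (card (UNIV :: 'f set)) powr (real (degree a) - real (degree b)))"

text \<open>x in Z_pi is the rational a/b (b nonzero) with |a/b| < 1.\<close>
definition small_Z :: "int \<Rightarrow> (nat \<Rightarrow> int) \<Rightarrow> bool" where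
  "small_Z \<pi> x \<longleftrightarrow> (\<exists>a b. b \<noteq> 0 \<and> (\<forall>n. \<pi> ^ n dvd (b * x n - a)) \<and> rat_abs a b < 1)"

text \<open>x in A_v is the element a/b of k (b nonzero) with |a/b|_infinity < 1.\<close>
definition small_A :: "'f::{finite,field} poly \<Rightarrow> (nat \<Rightarrow> 'f poly) \<Rightarrow> bool" where
  "small_A \<pi> x \<longleftrightarrow> (\<exists>a b. b \<noteq> 0 \<and> (\<forall>n. \<pi> ^ n dvd (b * x n - a)) \<and> kinf_abs a b < 1)"

text \<open>The factors are split into the Z-factors (indices in I, uniformizer power piZ t)
  and the A-factors (indices in J, uniformizer power piA t).  Components outside
  the index sets are fixed to 0.\<close>

type_synonym 'f obar = "(nat \<Rightarrow> nat \<Rightarrow> int) \<times> (nat \<Rightarrow> nat \<Rightarrow> 'f poly)"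

definition Obar :: "nat set \<Rightarrow> nat set \<Rightarrow> (nat \<Rightarrow> int) \<Rightarrow> (nat \<Rightarrow> 'f::field poly) \<Rightarrow> 'f obar set" where
  "Obar I J piZ piA = {(u, w).
     (\<forall>t. if t \<in> I then u t \<in> adic_elems (piZ t) else u t = (\<lambda>_. 0)) \<and>
     (\<forall>t. if t \<in> J then w t \<in> adic_elems (piA t) else w t = (\<lambda>_. 0))}"

definition obar_neg :: "(nat \<Rightarrow> int) \<Rightarrow> (nat \<Rightarrow> 'f::field poly) \<Rightarrow> 'f obar \<Rightarrow> 'f obar" where
  "obar_neg piZ piA x = ((\<lambda>t. adic_neg (piZ t) (fst x t)), (\<lambda>t. adic_neg (piA t) (snd x t)))"

definition obar_phi :: "(nat \<Rightarrow> int) \<Rightarrow> (nat \<Rightarrow> 'f::field poly) \<Rightarrow> 'f obar \<Rightarrow> 'f obar" where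
  "obar_phi piZ piA x = ((\<lambda>t. adic_shift (piZ t) (fst x t)), (\<lambda>t. adic_shift (piA t) (snd x t)))"

definition obar_continuous ::
  "nat set \<Rightarrow> nat set \<Rightarrow> (nat \<Rightarrow> int) \<Rightarrow> (nat \<Rightarrow> 'f::field poly) \<Rightarrow> ('k::field \<Rightarrow> real) \<Rightarrow> ('f obar \<Rightarrow> 'k) \<Rightarrow> bool" where
  "obar_continuous I J piZ piA abv F \<longleftrightarrow>
     (\<forall>x\<in>Obar I J piZ piA. \<forall>\<epsilon>>0. \<exists>N. \<forall>y\<in>Obar I J piZ piA.
        ((\<forall>t\<in>I. fst y t N = fst x t N) \<and> (\<forall>t\<in>J. snd y t N = snd x t N))
        \<longrightarrow> abv (F y - F x) < \<epsilon>)"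

end

theory Submission
  imports Defs
begin

(* Put f y = F (-y) and write T for the digit shift phi; for G' y = G (-y) the claim becomes the
   cohomological equation G' y = f y * G' (T y).  For y and N let p_N y be the point of period 2N
   whose digits are the first N digits of y followed by N zeros.  Its negative is b / (pi^(2N) - 1)
   with b < pi^N, a rational of absolute value < 1, so the hypothesis gives
   prod_{j<2N} f (T^j (p_N y)) = 1.  Take G' y = lim g_N y with g_N y = prod_{j<N} f (T^j (p_N y)).
   Because the absolute value is non-Archimedean, a product of factors within eps of 1 is within
   eps of 1, whatever the number of factors.  As f is uniformly continuous on the compact space
   and f 0 = 1, the orbit identity above shows that g_(N+1) y / g_N y and
   g_N y / (f y * g_(N-1) (T y)) are uniformly close to 1: the orbits compared agree to many
   digits, except for a stretch close to the fixed point 0.  Hence g_N converges, and the limit is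
   continuous, non-vanishing and solves the equation. *)

section \<open>Digit expansions\<close>

text \<open>The division laws behind base-\<pi> digit expansions; they hold for \<pi> > 0 in \<int> and
  for \<pi> \<noteq> 0 in K[X].\<close>
locale adic_base =
  fixes \<pi> :: "'a::euclidean_ring_cancel"
  assumes base_nonzero: "\<pi> \<noteq> 0"
    and div_power_mult: "\<And>x m n. x div (\<pi> ^ m * \<pi> ^ n) = x div \<pi> ^ m div \<pi> ^ n"
    and mod_power_mult: "\<And>x m n. x mod (\<pi> ^ m * \<pi> ^ n) = \<pi> ^ m * (x div \<pi> ^ m mod \<pi> ^ n) + x mod \<pi> ^ m"
begin

lemma power_nonzero [simp]: "\<pi> ^ n \<noteq> 0"
  using base_nonzero by simp

lemma reduced_div_eq_0: "x mod \<pi> ^ m = x \<Longrightarrow> x div \<pi> ^ m = 0"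
  by (metis add_cancel_right_left div_mult_mod_eq mult_eq_0_iff power_nonzero)

lemma reduced_mono:
  assumes "x mod \<pi> ^ m = x" and "m \<le> n"
  shows "x mod \<pi> ^ n = x"
proof -
  have "x mod \<pi> ^ n = x mod (\<pi> ^ m * \<pi> ^ (n - m))"
    using \<open>m \<le> n\<close> by (simp flip: power_add)
  also have "\<dots> = x"
    using assms(1) reduced_div_eq_0[OF assms(1)] by (simp add: mod_power_mult)
  finally show ?thesis .
qed

lemma mod_power_mod_le: "m \<le> n \<Longrightarrow> x mod \<pi> ^ n mod \<pi> ^ m = x mod \<pi> ^ m"
  by (simp add: mod_mod_cancel le_imp_power_dvd)

lemma div_add_reduced:
  assumes "b mod \<pi> ^ L = b"
  shows "(b + \<pi> ^ L * c) div \<pi> ^ L = c"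
proof -
  have "(b + \<pi> ^ L * c) div \<pi> ^ L = c + b div \<pi> ^ L"
    by (rule div_mult_self2) (simp add: base_nonzero)
  then show ?thesis
    using reduced_div_eq_0[OF assms] by simp
qed

lemma reduced_add:
  assumes "b mod \<pi> ^ L = b" and "c mod \<pi> ^ n = c"
  shows "(b + \<pi> ^ L * c) mod \<pi> ^ (L + n) = b + \<pi> ^ L * c"
  using assms div_add_reduced[OF assms(1)] by (simp add: power_add mod_power_mult)

lemma adic_elems_reduced: "x \<in> adic_elems \<pi> \<Longrightarrow> x n mod \<pi> ^ n = x n"
  by (simp add: adic_elems_def)

lemma adic_elems_coherent:
  assumes x: "x \<in> adic_elems \<pi>"
  shows "m \<le> n \<Longrightarrow> x n mod \<pi> ^ m = x m"
proof (induction n)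
  case (Suc n)
  show ?case
  proof (cases "m = Suc n")
    case False
    then have "m \<le> n" using Suc.prems by simp
    then have "x (Suc n) mod \<pi> ^ m = x (Suc n) mod \<pi> ^ n mod \<pi> ^ m"
      by (simp add: mod_power_mod_le)
    then show ?thesis
      using x Suc.IH \<open>m \<le> n\<close> by (simp add: adic_elems_def)
  qed (use adic_elems_reduced[OF x, of "Suc n"] in simp)
qed (use adic_elems_reduced[OF x, of 0] in simp)

lemma adic_elems_at_0: "x \<in> adic_elems \<pi> \<Longrightarrow> x 0 = 0"
  using adic_elems_reduced[of x 0] by simp

lemma adic_elems_reduced_mono:
  assumes "y \<in> adic_elems \<pi>" and "N \<le> L"
  shows "y N mod \<pi> ^ L = y N"
  using assms reduced_mono adic_elems_reduced by blast

lemma adic_shift_iterate: "(adic_shift \<pi> ^^ k) x n = x (n + k) div \<pi> ^ k"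
proof (induction k arbitrary: n)
  case (Suc k)
  have "(adic_shift \<pi> ^^ Suc k) x n = (adic_shift \<pi> ^^ k) x (Suc n) div \<pi>"
    by (simp add: adic_shift_def)
  also have "\<dots> = x (Suc n + k) div \<pi> ^ k div \<pi> ^ 1"
    using Suc.IH by simp
  also have "\<dots> = x (n + Suc k) div \<pi> ^ Suc k"
    using div_power_mult[of "x (Suc n + k)" k 1] by (simp add: mult.commute)
  finally show ?case .
qed simp

lemma div_base_mod_power: "y div \<pi> ^ 1 mod \<pi> ^ n = y mod \<pi> ^ (1 + n) div \<pi> ^ 1"
proof -
  have "y mod \<pi> ^ (1 + n) = y mod \<pi> ^ 1 + \<pi> ^ 1 * (y div \<pi> ^ 1 mod \<pi> ^ n)"
    using mod_power_mult[of y 1 n] by (simp only: power_add add.commute)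
  then show ?thesis
    by (simp only: div_add_reduced mod_mod_trivial)
qed

lemma adic_shift_in_elems:
  assumes x: "x \<in> adic_elems \<pi>"
  shows "adic_shift \<pi> x \<in> adic_elems \<pi>"
  unfolding adic_elems_def adic_shift_def
proof (intro CollectI allI conjI)
  fix n
  show "x (Suc n) div \<pi> mod \<pi> ^ n = x (Suc n) div \<pi>"
    using div_base_mod_power[of "x (Suc n)" n] adic_elems_reduced[OF x, of "Suc n"] by simp
  show "x (Suc (Suc n)) div \<pi> mod \<pi> ^ n = x (Suc n) div \<pi>"
    using div_base_mod_power[of "x (Suc (Suc n))" n] adic_elems_coherent[OF x, of "Suc n" "Suc (Suc n)"]
    by simp
qed

lemma adic_neg_in_elems:
  assumes x: "x \<in> adic_elems \<pi>"
  shows "adic_neg \<pi> x \<in> adic_elems \<pi>"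
  unfolding adic_elems_def adic_neg_def
proof (intro CollectI allI conjI)
  fix n
  have "- x (Suc n) mod \<pi> ^ Suc n mod \<pi> ^ n = - (x (Suc n) mod \<pi> ^ n) mod \<pi> ^ n"
    by (subst mod_power_mod_le) (simp_all add: mod_minus_eq)
  then show "- x (Suc n) mod \<pi> ^ Suc n mod \<pi> ^ n = - x n mod \<pi> ^ n"
    using x by (simp add: adic_elems_def)
qed simp

lemma adic_neg_neg: "x \<in> adic_elems \<pi> \<Longrightarrow> adic_neg \<pi> (adic_neg \<pi> x) = x"
proof
  fix n
  assume x: "x \<in> adic_elems \<pi>"
  have "- (- x n mod \<pi> ^ n) mod \<pi> ^ n = - (- x n) mod \<pi> ^ n"
    by (simp add: mod_minus_eq)
  then show "adic_neg \<pi> (adic_neg \<pi> x) n = x n"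
    using adic_elems_reduced[OF x] by (simp add: adic_neg_def)
qed

lemma adic_elems_agree_mono:
  assumes "x \<in> adic_elems \<pi>" "y \<in> adic_elems \<pi>" "x m = y m" "n \<le> m"
  shows "x n = y n"
  using adic_elems_coherent[OF assms(1) assms(4)] adic_elems_coherent[OF assms(2) assms(4)] assms(3)
  by simp

end

lemma zero_in_adic_elems: "(\<lambda>_. 0) \<in> adic_elems \<pi>"
  by (simp add: adic_elems_def)

lemma adic_shift_zero: "adic_shift \<pi> (\<lambda>_. 0) = (\<lambda>_. 0)"
  by (simp add: adic_shift_def fun_eq_iff)

lemma adic_shift_iterate_zero: "(adic_shift \<pi> ^^ k) (\<lambda>_. 0) = (\<lambda>_. 0)"
  by (induction k) (simp_all add: adic_shift_zero)

lemma adic_neg_zero: "adic_neg \<pi> (\<lambda>_. 0) = (\<lambda>_. 0)"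
  by (simp add: adic_neg_def fun_eq_iff)

lemma diagonal_in_adic_elems:
  assumes "\<And>n. u n \<in> adic_elems \<pi>" and "\<And>n. u (Suc n) n = u n n"
  shows "(\<lambda>n. u n n) \<in> adic_elems \<pi>"
  using assms by (simp add: adic_elems_def)

section \<open>Periodic digit expansions\<close>

text \<open>The truncations of b / (1 - \<pi>^L) = b (1 + \<pi>^L + \<pi>^(2L) + ...), whose digits repeat
  the block b of length L.\<close>
definition adic_periodic :: "'a::euclidean_ring \<Rightarrow> nat \<Rightarrow> 'a \<Rightarrow> nat \<Rightarrow> 'a" where
  "adic_periodic \<pi> L b n = (b * (\<Sum>i<n. \<pi> ^ (i * L))) mod \<pi> ^ n"

lemma adic_periodic_0: "adic_periodic \<pi> L 0 = (\<lambda>_. 0)"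
  by (simp add: adic_periodic_def fun_eq_iff)

context adic_base begin

abbreviation geometric_sum :: "nat \<Rightarrow> nat \<Rightarrow> 'a" where
  "geometric_sum L m \<equiv> \<Sum>i<m. \<pi> ^ (i * L)"

lemma geometric_sum_Suc: "geometric_sum L (Suc n) = 1 + \<pi> ^ L * geometric_sum L n"
  by (simp only: sum.lessThan_Suc_shift) (simp add: sum_distrib_left power_add)

lemma geometric_sum_telescope: "(1 - \<pi> ^ L) * geometric_sum L n = 1 - \<pi> ^ (n * L)"
proof (induction n)
  case (Suc n)
  have "(1 - \<pi> ^ L) * geometric_sum L (Suc n) = (1 - \<pi> ^ L) + \<pi> ^ L * ((1 - \<pi> ^ L) * geometric_sum L n)"
    by (simp only: geometric_sum_Suc) (simp add: algebra_simps)
  also have "\<dots> = 1 - \<pi> ^ (Suc n * L)"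
    unfolding Suc.IH by (simp add: algebra_simps power_add)
  finally show ?case .
qed simp

lemma geometric_sum_diff_dvd:
  assumes "n \<le> m * L"
  shows "m \<le> m' \<Longrightarrow> \<pi> ^ n dvd (geometric_sum L m' - geometric_sum L m)"
proof (induction m' rule: dec_induct)
  case (step m')
  have "\<pi> ^ n dvd \<pi> ^ (m' * L)"
    using assms step.hyps by (intro le_imp_power_dvd) (meson le_trans mult_le_mono1)
  moreover have "geometric_sum L (Suc m') - geometric_sum L m
      = (geometric_sum L m' - geometric_sum L m) + \<pi> ^ (m' * L)"
    by (simp add: algebra_simps)
  ultimately show ?case
    using step.IH by (simp only: dvd_add)
qed simp

lemma adic_periodic_eq_mod:
  assumes n: "n \<le> m * L"
  shows "(b * geometric_sum L m) mod \<pi> ^ n = adic_periodic \<pi> L b n"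
proof (cases "n = 0")
  case False
  then have "n \<le> n * L"
    using n by (cases L) auto
  then have "\<pi> ^ n dvd (geometric_sum L n - geometric_sum L m) \<or>
             \<pi> ^ n dvd (geometric_sum L m - geometric_sum L n)"
    using geometric_sum_diff_dvd n by (cases "m \<le> n") auto
  then have "\<pi> ^ n dvd (geometric_sum L m - geometric_sum L n)"
    using dvd_minus_iff minus_diff_eq by metis
  then have "\<pi> ^ n dvd (b * geometric_sum L m - b * geometric_sum L n)"
    by (simp add: right_diff_distrib[symmetric])
  then show ?thesis
    unfolding adic_periodic_def by (simp add: mod_eq_dvd_iff)
qed (simp add: adic_periodic_def)

lemma adic_periodic_reduced: "adic_periodic \<pi> L b n mod \<pi> ^ n = adic_periodic \<pi> L b n"
  by (simp add: adic_periodic_def)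

lemma adic_periodic_low: "n \<le> L \<Longrightarrow> adic_periodic \<pi> L b n = b mod \<pi> ^ n"
  using adic_periodic_eq_mod[of n 1 L b] by simp

lemma adic_periodic_in_elems:
  assumes "1 \<le> L"
  shows "adic_periodic \<pi> L b \<in> adic_elems \<pi>"
  unfolding adic_elems_def
proof (intro CollectI allI conjI)
  fix n
  have "n \<le> n * L"
    using assms by simp
  then have "n \<le> Suc n * L"
    by (simp add: trans_le_add2)
  then have "(b * geometric_sum L (Suc n)) mod \<pi> ^ n = adic_periodic \<pi> L b n"
    by (rule adic_periodic_eq_mod)
  moreover have "adic_periodic \<pi> L b (Suc n) mod \<pi> ^ n = (b * geometric_sum L (Suc n)) mod \<pi> ^ n"
    unfolding adic_periodic_def by (rule mod_power_mod_le) simp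
  ultimately show "adic_periodic \<pi> L b (Suc n) mod \<pi> ^ n = adic_periodic \<pi> L b n"
    by simp
qed (rule adic_periodic_reduced)

lemma adic_periodic_add_period:
  assumes b: "b mod \<pi> ^ L = b" and L: "1 \<le> L"
  shows "adic_periodic \<pi> L b (n + L) = b + \<pi> ^ L * adic_periodic \<pi> L b n"
proof -
  define q where "q = b * geometric_sum L n div \<pi> ^ n"
  have "n * 1 \<le> n * L"
    using L by (rule mult_le_mono2)
  then have "n + L \<le> Suc n * L"
    by (simp only: mult_1_right mult_Suc add.commute add_le_mono1)
  then have "adic_periodic \<pi> L b (n + L) = (b * geometric_sum L (Suc n)) mod \<pi> ^ (n + L)"
    by (rule adic_periodic_eq_mod[symmetric])
  also have "b * geometric_sum L (Suc n)
      = (b + \<pi> ^ L * adic_periodic \<pi> L b n) + \<pi> ^ (L + n) * q"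
  proof -
    have "b * geometric_sum L n = adic_periodic \<pi> L b n + \<pi> ^ n * q"
      unfolding adic_periodic_def q_def by (simp add: mod_mult_div_eq)
    then have "\<pi> ^ L * (b * geometric_sum L n) = \<pi> ^ L * adic_periodic \<pi> L b n + \<pi> ^ (L + n) * q"
      by (simp add: distrib_left power_add mult.assoc)
    then show ?thesis
      by (simp only: geometric_sum_Suc distrib_left mult_1_right mult.left_commute[of b] add.assoc)
  qed
  also have "\<dots> mod \<pi> ^ (n + L) = (b + \<pi> ^ L * adic_periodic \<pi> L b n) mod \<pi> ^ (L + n)"
    by (simp add: add.commute)
  also have "\<dots> = b + \<pi> ^ L * adic_periodic \<pi> L b n"
    by (rule reduced_add[OF b adic_periodic_reduced])
  finally show ?thesis .
qed

lemma adic_periodic_cong: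
  assumes "1 \<le> L"
  shows "\<pi> ^ n dvd ((1 - \<pi> ^ L) * adic_periodic \<pi> L b n - b)"
proof -
  define q where "q = b * geometric_sum L n div \<pi> ^ n"
  have p: "adic_periodic \<pi> L b n = b * geometric_sum L n - \<pi> ^ n * q"
    unfolding adic_periodic_def q_def by (simp add: minus_mult_div_eq_mod[symmetric])
  have "(1 - \<pi> ^ L) * adic_periodic \<pi> L b n - b
      = b * ((1 - \<pi> ^ L) * geometric_sum L n) - b - \<pi> ^ n * ((1 - \<pi> ^ L) * q)"
    unfolding p by (simp add: algebra_simps)
  also have "\<dots> = - (b * \<pi> ^ (n * L)) - \<pi> ^ n * ((1 - \<pi> ^ L) * q)"
    by (simp only: geometric_sum_telescope) (simp add: algebra_simps)
  finally have "(1 - \<pi> ^ L) * adic_periodic \<pi> L b n - b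
      = - (b * \<pi> ^ (n * L)) - \<pi> ^ n * ((1 - \<pi> ^ L) * q)" .
  moreover have "\<pi> ^ n dvd \<pi> ^ (n * L)"
    using assms by (intro le_imp_power_dvd) simp
  ultimately show ?thesis
    by (simp add: dvd_diff dvd_minus_iff)
qed

lemma adic_neg_periodic_cong:
  assumes "1 \<le> L"
  shows "\<pi> ^ n dvd ((1 - \<pi> ^ L) * adic_neg \<pi> (adic_periodic \<pi> L b) n + b)"
proof -
  define p where "p = adic_periodic \<pi> L b n"
  have "adic_neg \<pi> (adic_periodic \<pi> L b) n = - p - \<pi> ^ n * (- p div \<pi> ^ n)"
    unfolding adic_neg_def p_def by (simp add: minus_mult_div_eq_mod[symmetric])
  then have "(1 - \<pi> ^ L) * adic_neg \<pi> (adic_periodic \<pi> L b) n + b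
      = - ((1 - \<pi> ^ L) * p - b) - \<pi> ^ n * ((1 - \<pi> ^ L) * (- p div \<pi> ^ n))"
    by (simp only: right_diff_distrib mult.left_commute[of "1 - \<pi> ^ L"]) (simp add: algebra_simps)
  moreover have "\<pi> ^ n dvd - ((1 - \<pi> ^ L) * p - b)"
    using adic_periodic_cong[OF assms, of n b] unfolding p_def by (simp only: dvd_minus_iff)
  ultimately show ?thesis
    by (simp only: dvd_diff dvd_triv_left)
qed

lemma adic_periodic_shift_period:
  assumes b: "b mod \<pi> ^ L = b" and L: "1 \<le> L"
  shows "(adic_shift \<pi> ^^ L) (adic_periodic \<pi> L b) = adic_periodic \<pi> L b"
proof
  fix n
  show "(adic_shift \<pi> ^^ L) (adic_periodic \<pi> L b) n = adic_periodic \<pi> L b n"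
    by (simp only: adic_shift_iterate adic_periodic_add_period[OF assms] div_add_reduced[OF b])
qed

lemma adic_periodic_shift_zero:
  assumes "b mod \<pi> ^ N = b" and "N \<le> L"
  shows "(adic_shift \<pi> ^^ N) (adic_periodic \<pi> L b) (L - N) = 0"
proof -
  have "(adic_shift \<pi> ^^ N) (adic_periodic \<pi> L b) (L - N) = adic_periodic \<pi> L b L div \<pi> ^ N"
    using assms(2) by (simp add: adic_shift_iterate)
  also have "\<dots> = b div \<pi> ^ N"
    using reduced_mono[OF assms] by (simp add: adic_periodic_low)
  finally show ?thesis
    using reduced_div_eq_0[OF assms(1)] by simp
qed

lemma adic_periodic_shift_tail:
  assumes b: "b mod \<pi> ^ Suc N = b" and L: "Suc N \<le> L"
  shows "(adic_shift \<pi> ^^ Suc N) (adic_periodic \<pi> L b) (L - 1) = \<pi> ^ (L - Suc N) * (b mod \<pi> ^ N)"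
proof -
  have "\<pi> ^ L = \<pi> ^ Suc N * \<pi> ^ (L - Suc N)"
    using L by (metis le_add_diff_inverse power_add)
  moreover have "adic_periodic \<pi> L b (N + L) = b + \<pi> ^ L * (b mod \<pi> ^ N)"
    using adic_periodic_add_period[OF reduced_mono[OF b L] ] L adic_periodic_low[of N L b]
    by simp
  moreover have "L - 1 + Suc N = N + L"
    using L by simp
  ultimately show ?thesis
    using div_add_reduced[OF b, of "\<pi> ^ (L - Suc N) * (b mod \<pi> ^ N)"]
    by (simp only: adic_shift_iterate mult.assoc)
qed

lemma adic_periodic_shift_start:
  assumes b: "b mod \<pi> ^ L = b" and L: "1 \<le> L"
  shows "adic_shift \<pi> (adic_periodic \<pi> L b) (L - 1) = adic_periodic \<pi> L (b div \<pi>) (L - 1)"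
proof -
  have "adic_shift \<pi> (adic_periodic \<pi> L b) (L - 1) = b div \<pi>"
    using L b by (simp add: adic_shift_def adic_periodic_low)
  moreover have "b div \<pi> ^ 1 mod \<pi> ^ (L - 1) = b div \<pi> ^ 1"
    using div_base_mod_power[of b "L - 1"] b L by simp
  ultimately show ?thesis
    by (simp add: adic_periodic_low)
qed

lemma adic_periodic_shift_tail_coherent:
  assumes y: "y \<in> adic_elems \<pi>" and L: "Suc N < L"
  shows "(adic_shift \<pi> ^^ Suc N) (adic_periodic \<pi> L (y N)) (L - 1)
       = (adic_shift \<pi> ^^ Suc N) (adic_periodic \<pi> L (y (Suc N))) (L - 1)"
proof -
  have "y N mod \<pi> ^ Suc N = y N" "y (Suc N) mod \<pi> ^ Suc N = y (Suc N)"
    using adic_elems_reduced_mono[OF y, of N "Suc N"] adic_elems_reduced[OF y, of "Suc N"] by simp_all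
  moreover have "y N mod \<pi> ^ N = y (Suc N) mod \<pi> ^ N"
    using y by (simp add: adic_elems_reduced adic_elems_coherent)
  ultimately show ?thesis
    using L by (simp only: adic_periodic_shift_tail less_imp_le)
qed

lemma adic_periodic_shift_start_coherent:
  assumes y: "y \<in> adic_elems \<pi>" and N: "1 \<le> N" "N < L"
  shows "adic_shift \<pi> (adic_periodic \<pi> L (y N)) (L - 1)
       = adic_periodic \<pi> L (adic_shift \<pi> y (N - 1)) (L - 1)"
proof -
  have "adic_shift \<pi> y (N - 1) = y N div \<pi>"
    using N by (simp add: adic_shift_def)
  moreover have "y N mod \<pi> ^ L = y N"
    using y N by (simp add: adic_elems_reduced_mono)
  ultimately show ?thesis
    using N by (simp only: adic_periodic_shift_start)
qed

end

section \<open>Integers and polynomials\<close>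

lemma adic_base_int: "(\<pi>::int) > 0 \<Longrightarrow> adic_base \<pi>"
  by unfold_locales (auto simp: zdiv_zmult2_eq zmod_zmult2_eq)

lemma adic_base_poly: "(\<pi>::'f::field poly) \<noteq> 0 \<Longrightarrow> adic_base \<pi>"
  by unfold_locales (auto simp: poly_div_mult_right poly_mod_mult_right)

lemma prime_power_gt_1:
  assumes "prime (p::nat)" and "0 < e"
  shows "int p ^ e > 1"
proof -
  have "1 < int p"
    using prime_gt_1_nat[OF assms(1)] by simp
  then show ?thesis
    using assms(2) by simp
qed

lemma degree_irreducible_power_pos:
  assumes "irreducible (v::'f::field poly)" and "0 < e"
  shows "degree (v ^ e) > 0"
proof -
  have "v \<noteq> 0"
    using assms(1) by auto
  moreover have "degree v > 0"
    using irreducible_not_unit[OF assms(1)] is_unit_iff_degree[OF \<open>v \<noteq> 0\<close>] by simp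
  ultimately show ?thesis
    using assms(2) by (simp add: degree_power_eq)
qed

lemma finite_reduced_int:
  assumes "(\<pi>::int) > 0"
  shows "finite {x. x mod \<pi> ^ n = x}"
proof (rule finite_subset)
  show "{x. x mod \<pi> ^ n = x} \<subseteq> {0..<\<pi> ^ n}"
    using assms pos_mod_sign[of "\<pi> ^ n"] pos_mod_bound[of "\<pi> ^ n"]
    by (metis (mono_tags, lifting) atLeastLessThan_iff mem_Collect_eq subsetI zero_less_power)
qed simp

lemma finite_degree_less: "finite {x::'f::{finite,field} poly. degree x < d}"
proof -
  have "inj_on (\<lambda>x. map (coeff x) [0..<d]) {x::'f poly. degree x < d}"
  proof (rule inj_onI, rule poly_eqI)
    fix x y :: "'f poly" and i
    assume "x \<in> {x. degree x < d}" "y \<in> {x. degree x < d}"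
      and "map (coeff x) [0..<d] = map (coeff y) [0..<d]"
    then show "coeff x i = coeff y i"
      by (cases "i < d") (auto simp: coeff_eq_0 dest: map_eq_conv[THEN iffD1])
  qed
  moreover have "(\<lambda>x. map (coeff x) [0..<d]) ` {x::'f poly. degree x < d}
      \<subseteq> {xs. set xs \<subseteq> UNIV \<and> length xs = d}"
    by auto
  moreover have "finite {xs::'f list. set xs \<subseteq> UNIV \<and> length xs = d}"
    by (rule finite_lists_length_eq) simp
  ultimately show ?thesis
    by (meson finite_imageD finite_subset)
qed

lemma finite_reduced_poly:
  assumes "(\<pi>::'f::{finite,field} poly) \<noteq> 0"
  shows "finite {x. x mod \<pi> ^ n = x}"
proof (rule finite_subset)
  show "{x. x mod \<pi> ^ n = x} \<subseteq> insert 0 {x. degree x < degree (\<pi> ^ n)}"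
  proof
    fix x
    assume "x \<in> {x. x mod \<pi> ^ n = x}"
    moreover have "x mod \<pi> ^ n = 0 \<or> degree (x mod \<pi> ^ n) < degree (\<pi> ^ n)"
      using assms by (intro degree_mod_less) simp
    ultimately show "x \<in> insert 0 {x. degree x < degree (\<pi> ^ n)}"
      by auto
  qed
qed (simp add: finite_degree_less)

lemma card_UNIV_field_ge_2: "card (UNIV :: 'f::{finite,field} set) \<ge> 2"
  using card_mono[of "UNIV :: 'f set" "{0, 1}"] by simp

lemma small_Z_neg_periodic:
  assumes \<pi>: "(\<pi>::int) > 1" and b: "b mod \<pi> ^ N = b" and N: "N < L"
  shows "small_Z \<pi> (adic_neg \<pi> (adic_periodic \<pi> L b))"
proof -
  interpret adic_base \<pi>
    using \<pi> by (simp add: adic_base_int)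
  have "0 \<le> b" "b < \<pi> ^ N"
    using \<pi> b pos_mod_sign[of "\<pi> ^ N" b] pos_mod_bound[of "\<pi> ^ N" b] by auto
  moreover have "2 * \<pi> ^ N \<le> \<pi> ^ L"
  proof -
    have "2 * \<pi> ^ N \<le> \<pi> * \<pi> ^ N"
      using \<pi> by (intro mult_right_mono) auto
    also have "\<dots> \<le> \<pi> ^ L"
      using \<pi> N power_increasing[of "Suc N" L \<pi>] by simp
    finally show ?thesis .
  qed
  ultimately have bound: "0 \<le> b" "b < \<pi> ^ L - 1"
    by linarith+
  show ?thesis
    unfolding small_Z_def
  proof (intro exI conjI allI)
    show "1 - \<pi> ^ L \<noteq> 0"
      using bound by linarith
    show "\<pi> ^ n dvd ((1 - \<pi> ^ L) * adic_neg \<pi> (adic_periodic \<pi> L b) n - - b)" for n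
      using adic_neg_periodic_cong[of L n b] N by simp
    have "real_of_int (- b) / real_of_int (1 - \<pi> ^ L) = real_of_int b / real_of_int (\<pi> ^ L - 1)"
      by (metis minus_divide_divide of_int_minus minus_diff_eq)
    moreover have "0 \<le> real_of_int b" "real_of_int b < real_of_int (\<pi> ^ L - 1)"
      using bound by linarith+
    ultimately have "rat_abs (- b) (1 - \<pi> ^ L) = real_of_int b / real_of_int (\<pi> ^ L - 1)"
      and "real_of_int b / real_of_int (\<pi> ^ L - 1) < 1"
      unfolding rat_abs_def by simp_all
    then show "rat_abs (- b) (1 - \<pi> ^ L) < 1"
      by simp
  qed
qed

lemma small_A_neg_periodic:
  fixes \<pi> :: "'f::{finite,field} poly"
  assumes \<pi>: "degree \<pi> > 0" and b: "b mod \<pi> ^ N = b" and N: "N < L"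
  shows "small_A \<pi> (adic_neg \<pi> (adic_periodic \<pi> L b))"
proof -
  have \<pi>0: "\<pi> \<noteq> 0"
    using \<pi> by auto
  interpret adic_base \<pi>
    using \<pi>0 by (simp add: adic_base_poly)
  have "degree (\<pi> ^ L + (- 1)) = degree (\<pi> ^ L)"
    using \<pi> \<pi>0 N by (intro degree_add_eq_left) (simp add: degree_power_eq)
  moreover have "1 - \<pi> ^ L = - (\<pi> ^ L + (- 1))"
    by simp
  ultimately have deg_den: "degree (1 - \<pi> ^ L) = L * degree \<pi>"
    using \<pi>0 by (simp only: degree_minus) (simp add: degree_power_eq)
  show ?thesis
    unfolding small_A_def
  proof (intro exI conjI allI)
    show "1 - \<pi> ^ L \<noteq> 0"
      using deg_den \<pi> N by (intro notI) simp
    show "\<pi> ^ n dvd ((1 - \<pi> ^ L) * adic_neg \<pi> (adic_periodic \<pi> L b) n - - b)" for n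
      using adic_neg_periodic_cong[of L n b] N by simp
    show "kinf_abs (- b) (1 - \<pi> ^ L) < 1"
    proof (cases "b = 0")
      case False
      have "degree b < degree (\<pi> ^ N)"
        using degree_mod_less'[of "\<pi> ^ N" b] b False \<pi>0 by simp
      then have "degree b < N * degree \<pi>"
        using \<pi>0 by (simp add: degree_power_eq)
      also have "\<dots> < L * degree \<pi>"
        using N \<pi> by simp
      finally have "real (degree (- b)) - real (degree (1 - \<pi> ^ L)) < 0"
        using deg_den by (simp only: degree_minus of_nat_less_iff diff_less_0_iff_less)
      moreover have "real (card (UNIV :: 'f set)) > 1"
        using card_UNIV_field_ge_2[where 'f='f] by simp
      ultimately show ?thesis
        using False by (simp add: kinf_abs_def powr_less_one)
    qed (simp add: kinf_abs_def)
  qed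
qed

section \<open>Non-Archimedean absolute values\<close>

locale nonarch_field =
  fixes abv :: "'k::field \<Rightarrow> real"
  assumes nonarch: "nonarch_abs abv"
begin

lemma abv_nonneg: "0 \<le> abv x"
  using nonarch by (simp add: nonarch_abs_def)

lemma abv_eq_0_iff [simp]: "abv x = 0 \<longleftrightarrow> x = 0"
  using nonarch by (simp add: nonarch_abs_def)

lemma abv_mult: "abv (x * y) = abv x * abv y"
  using nonarch by (simp add: nonarch_abs_def)

lemma abv_add_le_max: "abv (x + y) \<le> max (abv x) (abv y)"
  using nonarch by (simp add: nonarch_abs_def)

lemma abv_0 [simp]: "abv 0 = 0"
  by simp

lemma abv_pos: "x \<noteq> 0 \<Longrightarrow> 0 < abv x"
  using abv_nonneg[of x] by (simp add: less_le)

lemma abv_1 [simp]: "abv 1 = 1"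
  using abv_mult[of 1 1] by simp

lemma abv_minus [simp]: "abv (- x) = abv x"
proof -
  have "(abv (-1) - 1) * (abv (-1) + 1) = 0"
    using abv_mult[of "-1" "-1"] by (simp add: algebra_simps)
  moreover have "abv (-1) + 1 \<noteq> 0"
    using abv_nonneg[of "-1"] by linarith
  ultimately show ?thesis
    using abv_mult[of "-1" x] by simp
qed

lemma abv_minus_commute: "abv (x - y) = abv (y - x)"
  using abv_minus[of "x - y"] by simp

lemma abv_inverse: "abv (inverse x) = inverse (abv x)"
proof (cases "x = 0")
  case False
  then have "abv (inverse x) * abv x = 1"
    using abv_mult[of "inverse x" x] by simp
  then show ?thesis
    by (metis inverse_unique mult.commute)
qed simp

lemma abv_divide: "abv (x / y) = abv x / abv y"
  by (simp add: divide_inverse abv_mult abv_inverse)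

lemma abv_add_less: "abv x < d \<Longrightarrow> abv y < d \<Longrightarrow> abv (x + y) < d"
  using abv_add_le_max[of x y] by simp

lemma abv_eq_if_diff_less: "abv (x - y) < abv y \<Longrightarrow> abv x = abv y"
  using abv_add_le_max[of "x - y" y] abv_add_le_max[of "y - x" x] abv_minus_commute[of x y]
  by (simp add: max_def split: if_splits)

definition abv_tendsto :: "(nat \<Rightarrow> 'k) \<Rightarrow> 'k \<Rightarrow> bool" where
  "abv_tendsto s l \<longleftrightarrow> (\<forall>e>0. \<exists>N. \<forall>n\<ge>N. abv (s n - l) < e)"

definition near1 :: "real \<Rightarrow> 'k \<Rightarrow> bool" where
  "near1 d a \<longleftrightarrow> abv (a - 1) < d"

lemma near1_1: "0 < d \<Longrightarrow> near1 d 1"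
  by (simp add: near1_def)

lemma near1_abv: "near1 d a \<Longrightarrow> d \<le> 1 \<Longrightarrow> abv a = 1"
  unfolding near1_def using abv_eq_if_diff_less[of a 1] by simp

lemma near1_nonzero: "near1 d a \<Longrightarrow> d \<le> 1 \<Longrightarrow> a \<noteq> 0"
  using near1_abv by fastforce

lemma near1_mult:
  assumes a: "near1 d a" and b: "near1 d b" and d: "d \<le> 1"
  shows "near1 d (a * b)"
proof -
  have "a * b - 1 = a * (b - 1) + (a - 1)"
    by (simp add: algebra_simps)
  moreover have "abv (a * (b - 1)) < d"
    using b near1_abv[OF a d] by (simp add: abv_mult near1_def)
  ultimately show ?thesis
    using a unfolding near1_def by (metis abv_add_less)
qed

lemma near1_inverse:
  assumes a: "near1 d a" and d: "d \<le> 1"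
  shows "near1 d (inverse a)"
proof -
  have "inverse a - 1 = - ((a - 1) * inverse a)"
    using near1_nonzero[OF a d] by (simp add: algebra_simps)
  then show ?thesis
    using a near1_abv[OF a d] by (simp add: near1_def abv_mult abv_inverse)
qed

lemma near1_divide: "near1 d a \<Longrightarrow> near1 d b \<Longrightarrow> d \<le> 1 \<Longrightarrow> near1 d (a / b)"
  by (simp add: divide_inverse near1_mult near1_inverse)

text \<open>Unlike over the reals, the bound does not grow with the number of factors.\<close>
lemma near1_prod:
  "finite S \<Longrightarrow> 0 < d \<Longrightarrow> d \<le> 1 \<Longrightarrow> (\<And>i. i \<in> S \<Longrightarrow> near1 d (g i)) \<Longrightarrow> near1 d (\<Prod>i\<in>S. g i)"
  by (induction S rule: finite_induct) (simp_all add: near1_1 near1_mult)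

lemma eq_1_if_near1:
  assumes "\<And>\<epsilon>. 0 < \<epsilon> \<Longrightarrow> \<epsilon> \<le> 1 \<Longrightarrow> near1 \<epsilon> a"
  shows "a = 1"
proof (rule ccontr)
  define d where "d = min 1 (abv (a - 1))"
  assume "a \<noteq> 1"
  then have "0 < d"
    unfolding d_def using abv_pos by simp
  then have "near1 d a"
    using assms d_def by simp
  then show False
    unfolding near1_def d_def by simp
qed

lemma near1_divide_iff_abv_diff:
  assumes "b \<noteq> 0"
  shows "near1 d (a / b) \<longleftrightarrow> abv (a - b) < d * abv b"
proof -
  have "a - b = (a / b - 1) * b"
    using assms by (simp add: algebra_simps)
  then have "abv (a - b) = abv (a / b - 1) * abv b"
    by (simp add: abv_mult)
  then show ?thesis
    using abv_pos[OF assms] by (simp add: near1_def)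
qed

lemma convergent_if_ratios_near1:
  assumes complete: "abv_complete abv" and nonzero: "\<And>n. s n \<noteq> 0"
    and ratios: "\<And>\<epsilon>. 0 < \<epsilon> \<Longrightarrow> \<epsilon> \<le> 1 \<Longrightarrow> \<exists>n0. \<forall>n\<ge>n0. \<forall>m\<ge>n. near1 \<epsilon> (s m / s n)"
  shows "\<exists>l. abv_tendsto s l"
proof -
  obtain n1 where n1: "\<forall>n\<ge>n1. \<forall>m\<ge>n. near1 1 (s m / s n)"
    using ratios[of 1] by auto
  define c where "c = abv (s n1)"
  have c: "0 < c"
    unfolding c_def using nonzero abv_pos by blast
  have abv_eq_c: "abv (s m) = c" if "n1 \<le> m" for m
    using near1_abv[of 1 "s m / s n1"] n1 that nonzero[of n1] by (simp add: abv_divide c_def)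
  have "\<exists>N. \<forall>m\<ge>N. \<forall>n\<ge>N. abv (s m - s n) < e" if e: "0 < e" for e
  proof -
    define \<epsilon> where "\<epsilon> = min 1 (e / c)"
    have \<epsilon>: "0 < \<epsilon>" "\<epsilon> \<le> 1" "\<epsilon> * c \<le> e"
      unfolding \<epsilon>_def using e c by (auto simp: min_def field_simps)
    obtain n0 where n0: "\<forall>n\<ge>n0. \<forall>m\<ge>n. near1 \<epsilon> (s m / s n)"
      using ratios \<epsilon> by blast
    have close: "abv (s m - s n) < e" if "max n0 n1 \<le> n" "n \<le> m" for m n
      using n0 that \<epsilon>(3) near1_divide_iff_abv_diff[OF nonzero[of n]] abv_eq_c[of n] by fastforce
    show ?thesis
    proof (intro exI allI impI)
      fix m n
      assume "max n0 n1 \<le> m" "max n0 n1 \<le> n"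
      then show "abv (s m - s n) < e"
        using close[of n m] close[of m n] abv_minus_commute[of "s m" "s n"] by (cases "n \<le> m") auto
    qed
  qed
  then show ?thesis
    using complete unfolding abv_complete_def abv_tendsto_def by blast
qed

lemma near1_limit_ratio:
  assumes lim: "abv_tendsto s l" and nonzero: "s n \<noteq> 0" and \<epsilon>: "0 < \<epsilon>"
    and ratios: "\<And>m. n \<le> m \<Longrightarrow> near1 \<epsilon> (s m / s n)"
  shows "near1 \<epsilon> (l / s n)"
proof -
  obtain M where M: "\<forall>m\<ge>M. abv (s m - l) < \<epsilon> * abv (s n)"
    using lim \<epsilon> abv_pos[OF nonzero] unfolding abv_tendsto_def by (meson mult_pos_pos)
  define m where "m = max M n"
  have "l / s n - 1 = (s m / s n - 1) + - ((s m - l) / s n)"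
    using nonzero by (simp add: field_simps)
  moreover have "abv (- ((s m - l) / s n)) < \<epsilon>"
    using M abv_pos[OF nonzero] by (simp add: m_def abv_divide pos_divide_less_eq)
  moreover have "abv (s m / s n - 1) < \<epsilon>"
    using ratios[of m] by (simp add: m_def near1_def)
  ultimately show ?thesis
    unfolding near1_def by (metis abv_add_less)
qed

end

section \<open>A Livsic theorem for abstract shift spaces\<close>

lemma prod_lessThan_add: "(\<Prod>j<N + M. h j) = (\<Prod>j<N. h j) * (\<Prod>i<M. h (N + i))"
  for h :: "nat \<Rightarrow> 'a::comm_monoid_mult"
  by (induction M) (simp_all add: algebra_simps)

text \<open>agree n x y: x and y have the same first n digits; T: the shift; z0: the zero point;
  per L N y: the point of period L whose first N digits are those of y, followed by L - N zeros.\<close>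
locale livsic_setting = nonarch_field abv
  for abv :: "'k::field \<Rightarrow> real" +
  fixes X :: "'x set" and T :: "'x \<Rightarrow> 'x" and agree :: "nat \<Rightarrow> 'x \<Rightarrow> 'x \<Rightarrow> bool"
    and per :: "nat \<Rightarrow> nat \<Rightarrow> 'x \<Rightarrow> 'x" and z0 :: 'x and f :: "'x \<Rightarrow> 'k"
  assumes complete: "abv_complete abv"
    and T_in: "x \<in> X \<Longrightarrow> T x \<in> X"
    and agree_sym: "agree n x y \<Longrightarrow> agree n y x"
    and agree_trans: "agree n x y \<Longrightarrow> agree n y z \<Longrightarrow> agree n x z"
    and agree_0: "x \<in> X \<Longrightarrow> y \<in> X \<Longrightarrow> agree 0 x y"
    and agree_mono: "x \<in> X \<Longrightarrow> y \<in> X \<Longrightarrow> agree m x y \<Longrightarrow> n \<le> m \<Longrightarrow> agree n x y"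
    and agree_iterate: "agree (n + k) x y \<Longrightarrow> agree n ((T ^^ k) x) ((T ^^ k) y)"
    and finite_classes: "\<exists>R. finite R \<and> R \<subseteq> X \<and> (\<forall>x\<in>X. \<exists>r\<in>R. agree k x r)"
    and limit_exists: "(\<And>k. s k \<in> X \<and> agree k (s (Suc k)) (s k)) \<Longrightarrow> \<exists>x\<in>X. \<forall>k. agree k x (s k)"
    and z0_in: "z0 \<in> X"
    and f_z0: "f z0 = 1"
    and f_nonzero: "x \<in> X \<Longrightarrow> f x \<noteq> 0"
    and f_continuous: "x \<in> X \<Longrightarrow> 0 < \<epsilon> \<Longrightarrow> \<exists>N. \<forall>y\<in>X. agree N y x \<longrightarrow> abv (f y - f x) < \<epsilon>"
    and per_in: "y \<in> X \<Longrightarrow> 0 < L \<Longrightarrow> per L N y \<in> X"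
    and per_orbit_prod: "y \<in> X \<Longrightarrow> N < L \<Longrightarrow> (\<Prod>j<L. f ((T ^^ j) (per L N y))) = 1"
    and per_agree: "y \<in> X \<Longrightarrow> N < L \<Longrightarrow> agree N (per L N y) y"
    and per_local: "x \<in> X \<Longrightarrow> y \<in> X \<Longrightarrow> agree N x y \<Longrightarrow> per L N x = per L N y"
    and per_change_period: "L \<le> L' \<Longrightarrow> agree L (per L N y) (per L' N y)"
    and per_zero_block: "y \<in> X \<Longrightarrow> N < L \<Longrightarrow> agree (L - N) ((T ^^ N) (per L N y)) z0"
    and per_Suc: "y \<in> X \<Longrightarrow> Suc N < L \<Longrightarrow>
      agree (L - 1) ((T ^^ Suc N) (per L N y)) ((T ^^ Suc N) (per L (Suc N) y))"
    and per_shift: "y \<in> X \<Longrightarrow> 1 \<le> N \<Longrightarrow> N < L \<Longrightarrow>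
      agree (L - 1) (T (per L N y)) (per L (N - 1) (T y))"
begin

lemma iterate_in: "x \<in> X \<Longrightarrow> (T ^^ j) x \<in> X"
  by (induction j) (simp_all add: T_in)

lemma agree_iterate_le:
  "x \<in> X \<Longrightarrow> y \<in> X \<Longrightarrow> agree m x y \<Longrightarrow> n + k \<le> m \<Longrightarrow> agree n ((T ^^ k) x) ((T ^^ k) y)"
  using agree_iterate agree_mono by blast

definition class_covered :: "('x \<Rightarrow> nat) \<Rightarrow> nat \<Rightarrow> 'x \<Rightarrow> bool" where
  "class_covered r k c \<longleftrightarrow>
     (\<exists>R. finite R \<and> R \<subseteq> X \<and> (\<forall>x\<in>X. agree k x c \<longrightarrow> (\<exists>c'\<in>R. agree (r c') x c')))"

lemma class_covered_refine:
  assumes c: "c \<in> X" and uncovered: "\<not> class_covered r k c"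
  shows "\<exists>c'. (c' \<in> X \<and> \<not> class_covered r (Suc k) c') \<and> agree k c' c"
proof (rule ccontr)
  assume none: "\<not> (\<exists>c'. (c' \<in> X \<and> \<not> class_covered r (Suc k) c') \<and> agree k c' c)"
  obtain Q where Q: "finite Q" "Q \<subseteq> X" "\<forall>x\<in>X. \<exists>q\<in>Q. agree (Suc k) x q"
    using finite_classes[of "Suc k"] by blast
  define Q' where "Q' = {q\<in>Q. agree k q c}"
  have "\<forall>q\<in>Q'. class_covered r (Suc k) q"
    using none Q(2) unfolding Q'_def by blast
  then have "\<forall>q\<in>Q'. \<exists>R. finite R \<and> R \<subseteq> X \<and>
      (\<forall>x\<in>X. agree (Suc k) x q \<longrightarrow> (\<exists>c'\<in>R. agree (r c') x c'))"
    by (simp only: class_covered_def)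
  then obtain R where R: "\<forall>q\<in>Q'. finite (R q) \<and> R q \<subseteq> X \<and>
      (\<forall>x\<in>X. agree (Suc k) x q \<longrightarrow> (\<exists>c'\<in>R q. agree (r c') x c'))"
    by (metis (no_types))
  have "class_covered r k c"
    unfolding class_covered_def
  proof (intro exI conjI ballI impI)
    show "finite (\<Union>q\<in>Q'. R q)" "(\<Union>q\<in>Q'. R q) \<subseteq> X"
      using R Q(1) by (auto simp: Q'_def)
    fix x
    assume x: "x \<in> X" "agree k x c"
    then obtain q where q: "q \<in> Q" "agree (Suc k) x q"
      using Q(3) by blast
    then have "agree k x q"
      using x(1) Q(2) agree_mono[of x q "Suc k" k] by auto
    then have "q \<in> Q'"
      using agree_trans[OF agree_sym x(2)] q(1) unfolding Q'_def by blast
    then show "\<exists>c'\<in>\<Union>q\<in>Q'. R q. agree (r c') x c'"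
      using R q(2) x(1) by blast
  qed
  then show False
    using uncovered by blast
qed

text \<open>Compactness, by Koenig's lemma: otherwise there is a nested sequence of classes of
  agree k, none finitely covered, and the ball around its limit point covers one of them.\<close>
lemma finite_ball_cover: "\<exists>R. finite R \<and> R \<subseteq> X \<and> (\<forall>x\<in>X. \<exists>c\<in>R. agree (r c) x c)"
proof (rule ccontr)
  assume uncovered: "\<not> (\<exists>R. finite R \<and> R \<subseteq> X \<and> (\<forall>x\<in>X. \<exists>c\<in>R. agree (r c) x c))"
  have "\<not> class_covered r 0 z0"
  proof
    assume "class_covered r 0 z0"
    then obtain R where R: "finite R" "R \<subseteq> X"
        "\<forall>x\<in>X. agree 0 x z0 \<longrightarrow> (\<exists>c'\<in>R. agree (r c') x c')"
      unfolding class_covered_def by blast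
    then have "\<forall>x\<in>X. \<exists>c\<in>R. agree (r c) x c"
      using agree_0 z0_in by blast
    then show False
      using uncovered R(1,2) by blast
  qed
  then obtain c where c: "\<And>k. c k \<in> X \<and> \<not> class_covered r k (c k) \<and> agree k (c (Suc k)) (c k)"
    using dependent_nat_choice[of "\<lambda>k c. c \<in> X \<and> \<not> class_covered r k c" "\<lambda>k c c'. agree k c' c"]
      z0_in class_covered_refine by blast
  then obtain x where x: "x \<in> X" "\<And>k. agree k x (c k)"
    using limit_exists[of c] by blast
  have "\<forall>y\<in>X. agree (r x) y (c (r x)) \<longrightarrow> agree (r x) y x"
    using agree_trans[OF _ agree_sym[OF x(2)]] by blast
  then have "class_covered r (r x) (c (r x))"
    unfolding class_covered_def using x(1) by (intro exI[of _ "{x}"]) simp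
  then show False
    using c by blast
qed

definition modulus :: "real \<Rightarrow> nat \<Rightarrow> bool" where
  "modulus \<epsilon> k \<longleftrightarrow> (\<forall>x\<in>X. \<forall>y\<in>X. agree k x y \<longrightarrow> near1 \<epsilon> (f x / f y))"

lemma modulusD: "modulus \<epsilon> k \<Longrightarrow> x \<in> X \<Longrightarrow> y \<in> X \<Longrightarrow> agree k x y \<Longrightarrow> near1 \<epsilon> (f x / f y)"
  by (simp add: modulus_def)

lemma modulus_exists:
  assumes \<epsilon>: "0 < \<epsilon>" "\<epsilon> \<le> 1"
  shows "\<exists>k. modulus \<epsilon> k"
proof -
  have "\<forall>c\<in>X. \<exists>N. \<forall>y\<in>X. agree N y c \<longrightarrow> near1 \<epsilon> (f y / f c)"
  proof
    fix c
    assume c: "c \<in> X"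
    obtain N where "\<forall>y\<in>X. agree N y c \<longrightarrow> abv (f y - f c) < \<epsilon> * abv (f c)"
      using f_continuous[OF c] \<epsilon> abv_pos[OF f_nonzero[OF c]] mult_pos_pos by blast
    then show "\<exists>N. \<forall>y\<in>X. agree N y c \<longrightarrow> near1 \<epsilon> (f y / f c)"
      using near1_divide_iff_abv_diff[OF f_nonzero[OF c]] by blast
  qed
  then obtain r where r: "\<forall>c\<in>X. \<forall>y\<in>X. agree (r c) y c \<longrightarrow> near1 \<epsilon> (f y / f c)"
    by (rule bchoice[THEN exE])
  obtain R where R: "finite R" "R \<subseteq> X" "\<forall>x\<in>X. \<exists>c\<in>R. agree (r c) x c"
    using finite_ball_cover[of r] by blast
  have "modulus \<epsilon> (\<Sum>c\<in>R. r c)"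
    unfolding modulus_def
  proof (intro ballI impI)
    fix x y
    assume xy: "x \<in> X" "y \<in> X" "agree (\<Sum>c\<in>R. r c) x y"
    then obtain c where c: "c \<in> R" "agree (r c) x c"
      using R(3) by blast
    have "c \<in> X"
      using c R(2) by blast
    have "agree (r c) x y"
      using agree_mono[OF xy member_le_sum[OF c(1) _ R(1)]] by simp
    then have "agree (r c) y c"
      using c(2) by (blast intro: agree_sym agree_trans)
    then have "near1 \<epsilon> ((f x / f c) / (f y / f c))"
      using r \<open>c \<in> X\<close> c(2) xy \<epsilon>(2) near1_divide by blast
    then show "near1 \<epsilon> (f x / f y)"
      using f_nonzero[OF \<open>c \<in> X\<close>] by simp
  qed
  then show ?thesis ..
qed

lemma near1_orbit_ratio:
  assumes k: "modulus \<epsilon> k" and \<epsilon>: "0 < \<epsilon>" "\<epsilon> \<le> 1"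
    and xy: "x \<in> X" "y \<in> X" "agree m x y" "k + M \<le> Suc m"
  shows "near1 \<epsilon> ((\<Prod>i<M. f ((T ^^ i) x)) / (\<Prod>i<M. f ((T ^^ i) y)))"
  unfolding prod_dividef[symmetric]
proof (rule near1_prod)
  fix i
  assume "i \<in> {..<M}"
  then have "agree k ((T ^^ i) x) ((T ^^ i) y)"
    using agree_iterate_le[OF xy(1-3)] xy(4) by simp
  then show "near1 \<epsilon> (f ((T ^^ i) x) / f ((T ^^ i) y))"
    by (rule modulusD[OF k iterate_in[OF xy(1)] iterate_in[OF xy(2)]])
qed (use \<epsilon> in simp_all)

definition orbit_prod :: "nat \<Rightarrow> nat \<Rightarrow> 'x \<Rightarrow> 'k" where
  "orbit_prod N L y = (\<Prod>j<N. f ((T ^^ j) (per L N y)))"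

lemma orbit_prod_nonzero: "y \<in> X \<Longrightarrow> 0 < L \<Longrightarrow> orbit_prod N L y \<noteq> 0"
  using f_nonzero[OF iterate_in[OF per_in]] by (simp add: orbit_prod_def)

lemma orbit_prod_change_period:
  assumes k: "modulus \<epsilon> k" and \<epsilon>: "0 < \<epsilon>" "\<epsilon> \<le> 1" and y: "y \<in> X"
    and N: "1 \<le> N" "k + N \<le> L" "L \<le> L'"
  shows "near1 \<epsilon> (orbit_prod N L y / orbit_prod N L' y)"
  unfolding orbit_prod_def
proof (rule near1_orbit_ratio[OF k \<epsilon>])
  show "per L N y \<in> X" "per L' N y \<in> X"
    using per_in[OF y] N by simp_all
  show "agree L (per L N y) (per L' N y)"
    by (rule per_change_period[OF N(3)])
  show "k + N \<le> Suc L"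
    using N by simp
qed

lemma funpow_add_apply: "(T ^^ (m + i)) z = (T ^^ i) ((T ^^ m) z)"
  by (simp add: funpow_add add.commute[of m])

lemma prod_orbit_split:
  assumes "M \<le> L"
  shows "(\<Prod>j<L. f ((T ^^ j) z)) = (\<Prod>j<M. f ((T ^^ j) z)) * (\<Prod>i<L - M. f ((T ^^ i) ((T ^^ M) z)))"
proof -
  have "(\<Prod>j<M + (L - M). f ((T ^^ j) z))
      = (\<Prod>j<M. f ((T ^^ j) z)) * (\<Prod>i<L - M. f ((T ^^ (M + i)) z))"
    by (rule prod_lessThan_add)
  then show ?thesis
    using assms by (simp only: funpow_add_apply le_add_diff_inverse)
qed

lemma orbit_prod_Suc:
  assumes k: "modulus \<epsilon> k" and \<epsilon>: "0 < \<epsilon>" "\<epsilon> \<le> 1" and y: "y \<in> X"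
    and N: "Suc N < L" "k \<le> N" "k + N \<le> L"
  shows "near1 \<epsilon> (orbit_prod (Suc N) L y / orbit_prod N L y)"
proof -
  \<comment> \<open>Both products are inverse to the rest of their orbit; what remains is one factor near z0
    and the ratio of two tails that agree to many digits.\<close>
  define p where "p = per L N y"
  define p' where "p' = per L (Suc N) y"
  define tail where "tail z = (\<Prod>i<L - Suc N. f ((T ^^ i) ((T ^^ Suc N) z)))" for z
  have in_X: "p \<in> X" "p' \<in> X"
    using per_in[OF y] N unfolding p_def p'_def by simp_all
  have split: "(\<Prod>j<L. f ((T ^^ j) z)) = (\<Prod>j<Suc N. f ((T ^^ j) z)) * tail z" for z
    unfolding tail_def using N by (intro prod_orbit_split) simp
  have orbit_p: "orbit_prod N L y * (f ((T ^^ N) p) * tail p) = 1"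
    using split[of p] per_orbit_prod[OF y, of N L] N unfolding orbit_prod_def p_def
    by (simp add: mult.assoc)
  have orbit_p': "orbit_prod (Suc N) L y * tail p' = 1"
    using split[of p'] per_orbit_prod[OF y, of "Suc N" L] N unfolding orbit_prod_def p'_def by simp
  have "orbit_prod N L y = inverse (f ((T ^^ N) p) * tail p)"
    using inverse_unique[of "f ((T ^^ N) p) * tail p"] orbit_p by (simp add: mult.commute)
  moreover have "orbit_prod (Suc N) L y = inverse (tail p')"
    using inverse_unique[of "tail p'" "orbit_prod (Suc N) L y"] orbit_p' by (simp only: mult.commute)
  ultimately have ratio: "orbit_prod (Suc N) L y / orbit_prod N L y
      = (f ((T ^^ N) p) / f z0) * (tail p / tail p')"
    by (simp add: f_z0 divide_inverse mult.commute)
  have "near1 \<epsilon> (f ((T ^^ N) p) / f z0)"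
  proof (rule modulusD[OF k iterate_in[OF in_X(1)] z0_in])
    show "agree k ((T ^^ N) p) z0"
      using agree_mono[OF iterate_in[OF in_X(1)] z0_in per_zero_block[OF y, of N L, folded p_def]] N
      by simp
  qed
  moreover have "near1 \<epsilon> (tail p / tail p')"
    unfolding tail_def
  proof (rule near1_orbit_ratio[OF k \<epsilon> iterate_in[OF in_X(1)] iterate_in[OF in_X(2)]])
    show "agree (L - 1) ((T ^^ Suc N) p) ((T ^^ Suc N) p')"
      using per_Suc[OF y N(1)] unfolding p_def p'_def .
  qed (use N in simp)
  ultimately show ?thesis
    unfolding ratio by (rule near1_mult[OF _ _ \<epsilon>(2)])
qed

lemma orbit_prod_shift:
  assumes k: "modulus \<epsilon> k" and \<epsilon>: "0 < \<epsilon>" "\<epsilon> \<le> 1" and y: "y \<in> X"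
    and N: "1 \<le> N" "N < L" "k \<le> N" "k + N \<le> L"
  shows "near1 \<epsilon> (orbit_prod N L y / (f y * orbit_prod (N - 1) L (T y)))"
proof -
  define p where "p = per L N y"
  define q where "q = per L (N - 1) (T y)"
  have in_X: "p \<in> X" "q \<in> X"
    using per_in[OF y] per_in[OF T_in[OF y]] N unfolding p_def q_def by simp_all
  have "orbit_prod N L y = f p * (\<Prod>i<N - 1. f ((T ^^ i) (T p)))"
  proof -
    have "orbit_prod N L y = (\<Prod>j<Suc (N - 1). f ((T ^^ j) p))"
      using N unfolding orbit_prod_def p_def by simp
    also have "\<dots> = f p * (\<Prod>i<N - 1. f ((T ^^ i) (T p)))"
      unfolding prod.lessThan_Suc_shift by (simp add: funpow_Suc_right del: funpow.simps)
    finally show ?thesis .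
  qed
  then have ratio: "orbit_prod N L y / (f y * orbit_prod (N - 1) L (T y))
      = (f p / f y) * ((\<Prod>i<N - 1. f ((T ^^ i) (T p))) / (\<Prod>i<N - 1. f ((T ^^ i) q)))"
    unfolding orbit_prod_def q_def by simp
  have "near1 \<epsilon> (f p / f y)"
  proof (rule modulusD[OF k in_X(1) y])
    show "agree k p y"
      using agree_mono[OF in_X(1) y per_agree[OF y N(2), folded p_def]] N by simp
  qed
  moreover have "near1 \<epsilon> ((\<Prod>i<N - 1. f ((T ^^ i) (T p))) / (\<Prod>i<N - 1. f ((T ^^ i) q)))"
  proof (rule near1_orbit_ratio[OF k \<epsilon> T_in[OF in_X(1)] in_X(2)])
    show "agree (L - 1) (T p) q"
      using per_shift[OF y N(1,2)] unfolding p_def q_def .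
  qed (use N in simp)
  ultimately show ?thesis
    unfolding ratio by (rule near1_mult[OF _ _ \<epsilon>(2)])
qed

definition approx :: "nat \<Rightarrow> 'x \<Rightarrow> 'k" where
  "approx N y = orbit_prod N (2 * N) y"

lemma approx_nonzero: "y \<in> X \<Longrightarrow> approx N y \<noteq> 0"
  using orbit_prod_nonzero[of y "2 * N" N] by (cases "N = 0") (simp_all add: approx_def orbit_prod_def)

lemma approx_local: "x \<in> X \<Longrightarrow> y \<in> X \<Longrightarrow> agree N x y \<Longrightarrow> approx N x = approx N y"
  by (simp add: approx_def orbit_prod_def per_local)

lemma approx_Suc:
  assumes k: "modulus \<epsilon> k" and \<epsilon>: "0 < \<epsilon>" "\<epsilon> \<le> 1" and y: "y \<in> X" and N: "k + 2 \<le> N"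
  shows "near1 \<epsilon> (approx (Suc N) y / approx N y)"
proof -
  have a: "near1 \<epsilon> (orbit_prod (Suc N) (2 * N) y / orbit_prod (Suc N) (2 * Suc N) y)"
    by (rule orbit_prod_change_period[OF k \<epsilon> y]) (use N in simp_all)
  have b: "near1 \<epsilon> (orbit_prod (Suc N) (2 * N) y / orbit_prod N (2 * N) y)"
    by (rule orbit_prod_Suc[OF k \<epsilon> y]) (use N in simp_all)
  have "approx (Suc N) y / approx N y
      = inverse (orbit_prod (Suc N) (2 * N) y / orbit_prod (Suc N) (2 * Suc N) y)
        * (orbit_prod (Suc N) (2 * N) y / orbit_prod N (2 * N) y)"
    using orbit_prod_nonzero[OF y, of "2 * N" "Suc N"] N by (simp add: approx_def field_simps)
  then show ?thesis
    using near1_mult[OF near1_inverse[OF a \<epsilon>(2)] b \<epsilon>(2)] by simp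
qed

lemma approx_ratio_near1:
  assumes k: "modulus \<epsilon> k" and \<epsilon>: "0 < \<epsilon>" "\<epsilon> \<le> 1" and y: "y \<in> X" and n: "k + 2 \<le> n"
  shows "n \<le> m \<Longrightarrow> near1 \<epsilon> (approx m y / approx n y)"
proof (induction m rule: dec_induct)
  case base
  show ?case
    using approx_nonzero[OF y] \<epsilon> by (simp add: near1_1)
next
  case (step m)
  have ratio: "approx (Suc m) y / approx n y
      = (approx (Suc m) y / approx m y) * (approx m y / approx n y)"
    using approx_nonzero[OF y] by simp
  have "near1 \<epsilon> (approx (Suc m) y / approx m y)"
    using approx_Suc[OF k \<epsilon> y] n step.hyps by simp
  then show ?case
    unfolding ratio by (rule near1_mult[OF _ step.IH \<epsilon>(2)])
qed

definition G :: "'x \<Rightarrow> 'k" where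
  "G y = (SOME l. abv_tendsto (\<lambda>n. approx n y) l)"

lemma approx_tendsto_G:
  assumes y: "y \<in> X"
  shows "abv_tendsto (\<lambda>n. approx n y) (G y)"
proof -
  have "\<exists>l. abv_tendsto (\<lambda>n. approx n y) l"
  proof (rule convergent_if_ratios_near1[OF complete approx_nonzero[OF y]])
    fix \<epsilon> :: real
    assume "0 < \<epsilon>" "\<epsilon> \<le> 1"
    then obtain k where "modulus \<epsilon> k"
      using modulus_exists by blast
    then show "\<exists>n0. \<forall>n\<ge>n0. \<forall>m\<ge>n. near1 \<epsilon> (approx m y / approx n y)"
      using approx_ratio_near1[OF _ \<open>0 < \<epsilon>\<close> \<open>\<epsilon> \<le> 1\<close> y] by blast
  qed
  then show ?thesis
    unfolding G_def by (rule someI_ex)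
qed

lemma G_near1_approx:
  assumes k: "modulus \<epsilon> k" and \<epsilon>: "0 < \<epsilon>" "\<epsilon> \<le> 1" and y: "y \<in> X" and n: "k + 2 \<le> n"
  shows "near1 \<epsilon> (G y / approx n y)"
  using near1_limit_ratio[OF approx_tendsto_G[OF y] approx_nonzero[OF y] \<epsilon>(1)]
    approx_ratio_near1[OF k \<epsilon> y n] by blast

lemma G_nonzero:
  assumes y: "y \<in> X"
  shows "G y \<noteq> 0"
proof -
  obtain k where k: "modulus 1 k"
    using modulus_exists[of 1] by auto
  have "near1 1 (G y / approx (k + 2) y)"
    by (rule G_near1_approx[OF k _ _ y]) simp_all
  then show ?thesis
    using near1_nonzero by fastforce
qed

lemma G_continuous:
  assumes x: "x \<in> X" and e: "0 < e"
  shows "\<exists>N. \<forall>y\<in>X. agree N y x \<longrightarrow> abv (G y - G x) < e"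
proof -
  define \<epsilon> where "\<epsilon> = min 1 (e / abv (G x))"
  have G_pos: "0 < abv (G x)"
    using abv_pos[OF G_nonzero[OF x]] .
  have \<epsilon>: "0 < \<epsilon>" "\<epsilon> \<le> 1" "\<epsilon> * abv (G x) \<le> e"
    unfolding \<epsilon>_def using e G_pos by (auto simp: min_def field_simps)
  obtain k where k: "modulus \<epsilon> k"
    using modulus_exists \<epsilon> by blast
  have "abv (G y - G x) < e" if y: "y \<in> X" and agree: "agree (k + 2) y x" for y
  proof -
    have "near1 \<epsilon> ((G y / approx (k + 2) y) / (G x / approx (k + 2) x))"
      using near1_divide[OF G_near1_approx[OF k \<epsilon>(1,2) y order_refl]
          G_near1_approx[OF k \<epsilon>(1,2) x order_refl] \<epsilon>(2)] .
    moreover have "(G y / approx (k + 2) y) / (G x / approx (k + 2) x) = G y / G x"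
      using approx_local[OF y x agree] approx_nonzero[OF x] by simp
    ultimately have "near1 \<epsilon> (G y / G x)"
      by simp
    then show ?thesis
      using near1_divide_iff_abv_diff[OF G_nonzero[OF x]] \<epsilon>(3) by simp
  qed
  then show ?thesis
    by blast
qed

lemma G_eq_f_mult_G_T:
  assumes y: "y \<in> X"
  shows "G y = f y * G (T y)"
proof -
  have Ty: "T y \<in> X"
    using T_in[OF y] .
  have "near1 \<epsilon> (G y / (f y * G (T y)))" if \<epsilon>: "0 < \<epsilon>" "\<epsilon> \<le> 1" for \<epsilon>
  proof -
    obtain k where k: "modulus \<epsilon> k"
      using modulus_exists \<epsilon> by blast
    define N where "N = k + 3"
    have a1: "near1 \<epsilon> (G y / approx N y)"
      by (rule G_near1_approx[OF k \<epsilon> y]) (simp add: N_def)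
    have a2: "near1 \<epsilon> (orbit_prod N (2 * N) y / (f y * orbit_prod (N - 1) (2 * N) (T y)))"
      by (rule orbit_prod_shift[OF k \<epsilon> y]) (simp_all add: N_def)
    have a3: "near1 \<epsilon> (orbit_prod (N - 1) (2 * (N - 1)) (T y) / orbit_prod (N - 1) (2 * N) (T y))"
      by (rule orbit_prod_change_period[OF k \<epsilon> Ty]) (simp_all add: N_def)
    have a4: "near1 \<epsilon> (G (T y) / approx (N - 1) (T y))"
      by (rule G_near1_approx[OF k \<epsilon> Ty]) (simp add: N_def)
    have "orbit_prod (N - 1) (2 * N) (T y) \<noteq> 0" "approx (N - 1) (T y) \<noteq> 0" "approx N y \<noteq> 0"
      using orbit_prod_nonzero[OF Ty] approx_nonzero[OF Ty] approx_nonzero[OF y] by (simp_all add: N_def)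
    then have "G y / (f y * G (T y)) = (G y / approx N y)
        * (orbit_prod N (2 * N) y / (f y * orbit_prod (N - 1) (2 * N) (T y)))
        * inverse (orbit_prod (N - 1) (2 * (N - 1)) (T y) / orbit_prod (N - 1) (2 * N) (T y))
        * inverse (G (T y) / approx (N - 1) (T y))"
      using G_nonzero[OF Ty] f_nonzero[OF y] unfolding approx_def by (simp add: field_simps)
    then show ?thesis
      using near1_mult[OF near1_mult[OF near1_mult[OF a1 a2 \<epsilon>(2)] near1_inverse[OF a3 \<epsilon>(2)] \<epsilon>(2)]
          near1_inverse[OF a4 \<epsilon>(2)] \<epsilon>(2)]
      by simp
  qed
  then have "G y / (f y * G (T y)) = 1"
    by (rule eq_1_if_near1)
  then show ?thesis
    using f_nonzero[OF y] G_nonzero[OF Ty] by simp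
qed

end

section \<open>The space Obar\<close>

definition obar_agree :: "nat set \<Rightarrow> nat set \<Rightarrow> nat \<Rightarrow> 'f obar \<Rightarrow> 'f obar \<Rightarrow> bool" where
  "obar_agree I J n x y \<longleftrightarrow> (\<forall>t\<in>I. fst x t n = fst y t n) \<and> (\<forall>t\<in>J. snd x t n = snd y t n)"

definition obar_periodic ::
  "(nat \<Rightarrow> int) \<Rightarrow> (nat \<Rightarrow> 'f::field poly) \<Rightarrow> nat \<Rightarrow> nat \<Rightarrow> 'f obar \<Rightarrow> 'f obar" where
  "obar_periodic piZ piA L N y =
     ((\<lambda>t. adic_periodic (piZ t) L (fst y t N)), (\<lambda>t. adic_periodic (piA t) L (snd y t N)))"

definition obar_zero :: "'f::zero obar" where
  "obar_zero = ((\<lambda>t n. 0), (\<lambda>t n. 0))"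

lemma obar_phi_iterate:
  "fst ((obar_phi piZ piA ^^ k) x) t = (adic_shift (piZ t) ^^ k) (fst x t)"
  "snd ((obar_phi piZ piA ^^ k) x) t = (adic_shift (piA t) ^^ k) (snd x t)"
  by (induction k) (simp_all add: obar_phi_def)

lemma obar_phi_components:
  "fst (obar_phi piZ piA x) t = adic_shift (piZ t) (fst x t)"
  "snd (obar_phi piZ piA x) t = adic_shift (piA t) (snd x t)"
  by (simp_all add: obar_phi_def)

lemma obar_neg_components:
  "fst (obar_neg piZ piA x) t = adic_neg (piZ t) (fst x t)"
  "snd (obar_neg piZ piA x) t = adic_neg (piA t) (snd x t)"
  by (simp_all add: obar_neg_def)

lemma Obar_iff: "x \<in> Obar I J piZ piA \<longleftrightarrow>
   (\<forall>t\<in>I. fst x t \<in> adic_elems (piZ t)) \<and> (\<forall>t. t \<notin> I \<longrightarrow> fst x t = (\<lambda>_. 0)) \<and>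
   (\<forall>t\<in>J. snd x t \<in> adic_elems (piA t)) \<and> (\<forall>t. t \<notin> J \<longrightarrow> snd x t = (\<lambda>_. 0))"
  by (cases x) (auto simp: Obar_def split: if_splits)

lemma obar_eqI: "(\<And>t. fst x t = fst y t) \<Longrightarrow> (\<And>t. snd x t = snd y t) \<Longrightarrow> x = y"
  by (simp add: prod_eq_iff fun_eq_iff)

lemma obar_agree_neg: "obar_agree I J n x y \<Longrightarrow> obar_agree I J n (obar_neg piZ piA x) (obar_neg piZ piA y)"
  by (simp add: obar_agree_def obar_neg_components adic_neg_def)

lemma obar_continuous_comp_neg:
  assumes "obar_continuous I J piZ piA abv F"
    and "\<And>x. x \<in> Obar I J piZ piA \<Longrightarrow> obar_neg piZ piA x \<in> Obar I J piZ piA"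
  shows "obar_continuous I J piZ piA abv (\<lambda>x. F (obar_neg piZ piA x))"
  unfolding obar_continuous_def
proof (intro ballI allI impI)
  fix x and \<epsilon> :: real
  assume x: "x \<in> Obar I J piZ piA" and \<epsilon>: "0 < \<epsilon>"
  obtain N where N: "\<forall>y\<in>Obar I J piZ piA. obar_agree I J N y (obar_neg piZ piA x)
      \<longrightarrow> abv (F y - F (obar_neg piZ piA x)) < \<epsilon>"
    using assms(1) assms(2)[OF x] \<epsilon> unfolding obar_continuous_def obar_agree_def by blast
  show "\<exists>N. \<forall>y\<in>Obar I J piZ piA. (\<forall>t\<in>I. fst y t N = fst x t N) \<and> (\<forall>t\<in>J. snd y t N = snd x t N)
      \<longrightarrow> abv (F (obar_neg piZ piA y) - F (obar_neg piZ piA x)) < \<epsilon>"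
    using N assms(2) obar_agree_neg[of I J N _ x piZ piA] unfolding obar_agree_def by blast
qed

context
  fixes I J :: "nat set" and piZ :: "nat \<Rightarrow> int" and piA :: "nat \<Rightarrow> 'f::{finite,field} poly"
  assumes piZ_gt_1: "\<forall>t\<in>I. piZ t > 1" and piA_degree: "\<forall>t\<in>J. degree (piA t) > 0"
begin

abbreviation "Ob \<equiv> Obar I J piZ piA"
abbreviation "phi \<equiv> obar_phi piZ piA"
abbreviation "neg \<equiv> obar_neg piZ piA"
abbreviation "per \<equiv> obar_periodic piZ piA"

lemma adic_base_Z: "t \<in> I \<Longrightarrow> adic_base (piZ t)"
  using piZ_gt_1 by (intro adic_base_int) auto

lemma adic_base_A: "t \<in> J \<Longrightarrow> adic_base (piA t)"
  using piA_degree by (intro adic_base_poly) auto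

lemma obar_phi_in: "x \<in> Ob \<Longrightarrow> phi x \<in> Ob"
  unfolding Obar_iff obar_phi_components
  by (auto simp: adic_shift_zero intro: adic_base.adic_shift_in_elems[OF adic_base_Z] adic_base.adic_shift_in_elems[OF adic_base_A])

lemma obar_neg_in: "x \<in> Ob \<Longrightarrow> neg x \<in> Ob"
  unfolding Obar_iff obar_neg_components
  by (auto simp: adic_neg_zero
      intro: adic_base.adic_neg_in_elems[OF adic_base_Z] adic_base.adic_neg_in_elems[OF adic_base_A])

lemma obar_neg_neg:
  assumes x: "x \<in> Ob"
  shows "neg (neg x) = x"
proof (rule obar_eqI)
  fix t
  show "fst (neg (neg x)) t = fst x t"
    using x by (cases "t \<in> I")
      (auto simp: obar_neg_components Obar_iff adic_neg_zero adic_base.adic_neg_neg[OF adic_base_Z])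
  show "snd (neg (neg x)) t = snd x t"
    using x by (cases "t \<in> J")
      (auto simp: obar_neg_components Obar_iff adic_neg_zero adic_base.adic_neg_neg[OF adic_base_A])
qed

lemma obar_zero_in: "obar_zero \<in> Ob"
  by (simp add: Obar_iff obar_zero_def zero_in_adic_elems)

lemma obar_agree_0: "x \<in> Ob \<Longrightarrow> y \<in> Ob \<Longrightarrow> obar_agree I J 0 x y"
  unfolding obar_agree_def Obar_iff
  by (auto simp: adic_base.adic_elems_at_0[OF adic_base_Z] adic_base.adic_elems_at_0[OF adic_base_A])

lemma obar_agree_mono:
  "x \<in> Ob \<Longrightarrow> y \<in> Ob \<Longrightarrow> obar_agree I J m x y \<Longrightarrow> n \<le> m \<Longrightarrow> obar_agree I J n x y"
  unfolding obar_agree_def Obar_iff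
  using adic_base.adic_elems_agree_mono[OF adic_base_Z] adic_base.adic_elems_agree_mono[OF adic_base_A]
  by blast

lemma obar_agree_iterate:
  "obar_agree I J (n + k) x y \<Longrightarrow> obar_agree I J n ((phi ^^ k) x) ((phi ^^ k) y)"
  unfolding obar_agree_def obar_phi_iterate
  by (simp add: adic_base.adic_shift_iterate[OF adic_base_Z] adic_base.adic_shift_iterate[OF adic_base_A])

lemma obar_periodic_in: "y \<in> Ob \<Longrightarrow> 0 < L \<Longrightarrow> per L N y \<in> Ob"
  unfolding Obar_iff obar_periodic_def
  by (auto simp: adic_periodic_0
      intro: adic_base.adic_periodic_in_elems[OF adic_base_Z] adic_base.adic_periodic_in_elems[OF adic_base_A])

lemma obar_periodic_period:
  assumes y: "y \<in> Ob" and N: "N < L"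
  shows "(phi ^^ L) (per L N y) = per L N y"
proof (rule obar_eqI)
  fix t
  show "fst ((phi ^^ L) (per L N y)) t = fst (per L N y) t"
    using y N by (cases "t \<in> I") (auto simp: obar_phi_iterate obar_periodic_def Obar_iff
        adic_periodic_0 adic_shift_iterate_zero adic_base.adic_periodic_shift_period[OF adic_base_Z]
        adic_base.adic_elems_reduced_mono[OF adic_base_Z])
  show "snd ((phi ^^ L) (per L N y)) t = snd (per L N y) t"
    using y N by (cases "t \<in> J") (auto simp: obar_phi_iterate obar_periodic_def Obar_iff
        adic_periodic_0 adic_shift_iterate_zero adic_base.adic_periodic_shift_period[OF adic_base_A]
        adic_base.adic_elems_reduced_mono[OF adic_base_A])
qed

lemma obar_periodic_agree: "y \<in> Ob \<Longrightarrow> N < L \<Longrightarrow> obar_agree I J N (per L N y) y"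
  unfolding obar_agree_def obar_periodic_def Obar_iff
  by (auto simp: adic_base.adic_periodic_low[OF adic_base_Z] adic_base.adic_periodic_low[OF adic_base_A]
      adic_base.adic_elems_reduced[OF adic_base_Z] adic_base.adic_elems_reduced[OF adic_base_A])

lemma obar_periodic_local:
  assumes "x \<in> Ob" "y \<in> Ob" "obar_agree I J N x y"
  shows "per L N x = per L N y"
proof (rule obar_eqI)
  fix t
  show "fst (per L N x) t = fst (per L N y) t"
    using assms by (cases "t \<in> I") (auto simp: obar_periodic_def obar_agree_def Obar_iff)
  show "snd (per L N x) t = snd (per L N y) t"
    using assms by (cases "t \<in> J") (auto simp: obar_periodic_def obar_agree_def Obar_iff)
qed

lemma obar_periodic_change_period: "L \<le> L' \<Longrightarrow> obar_agree I J L (per L N y) (per L' N y)"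
  unfolding obar_agree_def obar_periodic_def
  by (auto simp: adic_base.adic_periodic_low[OF adic_base_Z] adic_base.adic_periodic_low[OF adic_base_A])

lemma obar_periodic_zero_block:
  "y \<in> Ob \<Longrightarrow> N < L \<Longrightarrow> obar_agree I J (L - N) ((phi ^^ N) (per L N y)) obar_zero"
  unfolding obar_agree_def obar_periodic_def obar_phi_iterate obar_zero_def Obar_iff
  by (auto intro!: adic_base.adic_periodic_shift_zero[OF adic_base_Z] adic_base.adic_periodic_shift_zero[OF adic_base_A]
      simp: adic_base.adic_elems_reduced[OF adic_base_Z] adic_base.adic_elems_reduced[OF adic_base_A])

lemma obar_periodic_Suc:
  "y \<in> Ob \<Longrightarrow> Suc N < L \<Longrightarrow>
    obar_agree I J (L - 1) ((phi ^^ Suc N) (per L N y)) ((phi ^^ Suc N) (per L (Suc N) y))"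
  unfolding obar_agree_def obar_phi_iterate obar_periodic_def Obar_iff fst_conv snd_conv
  by (blast intro: adic_base.adic_periodic_shift_tail_coherent[OF adic_base_Z]
      adic_base.adic_periodic_shift_tail_coherent[OF adic_base_A])

lemma obar_periodic_shift:
  "y \<in> Ob \<Longrightarrow> 1 \<le> N \<Longrightarrow> N < L \<Longrightarrow> obar_agree I J (L - 1) (phi (per L N y)) (per L (N - 1) (phi y))"
  unfolding obar_agree_def obar_phi_components obar_periodic_def Obar_iff fst_conv snd_conv
  by (blast intro: adic_base.adic_periodic_shift_start_coherent[OF adic_base_Z]
      adic_base.adic_periodic_shift_start_coherent[OF adic_base_A])

lemma obar_periodic_zero: "per L N obar_zero = obar_zero"
  by (simp add: obar_periodic_def obar_zero_def adic_periodic_0)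

lemma obar_periodic_small:
  assumes y: "y \<in> Ob" and N: "N < L"
  shows "(\<forall>t\<in>I. small_Z (piZ t) (fst (neg (per L N y)) t))
       \<and> (\<forall>t\<in>J. small_A (piA t) (snd (neg (per L N y)) t))"
  using y N piZ_gt_1 piA_degree
  by (auto simp: obar_neg_components obar_periodic_def Obar_iff
      adic_base.adic_elems_reduced[OF adic_base_Z] adic_base.adic_elems_reduced[OF adic_base_A]
      intro!: small_Z_neg_periodic small_A_neg_periodic)

lemma obar_finite_classes:
  assumes "finite I" "finite J"
  shows "\<exists>R. finite R \<and> R \<subseteq> Ob \<and> (\<forall>x\<in>Ob. \<exists>r\<in>R. obar_agree I J k x r)"
proof -
  define key where "key x = (restrict (\<lambda>t. fst x t k) I, restrict (\<lambda>t. snd x t k) J)" for x :: "'f obar"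
  have agree_iff: "obar_agree I J k x y \<longleftrightarrow> key x = key y" for x y
    by (auto simp: key_def obar_agree_def restrict_def fun_eq_iff)
  have "key ` Ob \<subseteq> PiE I (\<lambda>t. {r. r mod piZ t ^ k = r}) \<times> PiE J (\<lambda>t. {r. r mod piA t ^ k = r})"
    by (auto simp: key_def Obar_iff
        adic_base.adic_elems_reduced[OF adic_base_Z] adic_base.adic_elems_reduced[OF adic_base_A])
  moreover have "finite (PiE I (\<lambda>t. {r. r mod piZ t ^ k = r}))"
    using assms(1) piZ_gt_1 finite_reduced_int by (intro finite_PiE) auto
  moreover have "finite (PiE J (\<lambda>t. {r. r mod piA t ^ k = r}))"
  proof (intro finite_PiE[OF assms(2)])
    show "finite {r. r mod piA t ^ k = r}" if "t \<in> J" for t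
      using piA_degree that by (intro finite_reduced_poly) auto
  qed
  ultimately have finite_keys: "finite (key ` Ob)"
    by (meson finite_SigmaI finite_subset)
  define rep where "rep v = (SOME x. x \<in> Ob \<and> key x = v)" for v
  have rep: "rep (key x) \<in> Ob \<and> key (rep (key x)) = key x" if "x \<in> Ob" for x
    unfolding rep_def by (rule someI[of _ x]) (use that in simp)
  show ?thesis
    using finite_keys rep agree_iff by (intro exI[of _ "rep ` key ` Ob"]) auto
qed

lemma obar_limit:
  assumes s: "\<And>k. s k \<in> Ob \<and> obar_agree I J k (s (Suc k)) (s k)"
  shows "\<exists>x\<in>Ob. \<forall>k. obar_agree I J k x (s k)"
proof -
  define x where "x = ((\<lambda>t n. fst (s n) t n), (\<lambda>t n. snd (s n) t n))"
  have "x \<in> Ob"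
    unfolding Obar_iff
  proof (intro conjI ballI allI impI)
    fix t
    assume t: "t \<in> I"
    show "fst x t \<in> adic_elems (piZ t)"
      unfolding x_def fst_conv
      by (rule diagonal_in_adic_elems[of "\<lambda>n. fst (s n) t"])
        (use s t in \<open>simp_all add: Obar_iff obar_agree_def\<close>)
  next
    fix t
    assume t: "t \<in> J"
    show "snd x t \<in> adic_elems (piA t)"
      unfolding x_def snd_conv
      by (rule diagonal_in_adic_elems[of "\<lambda>n. snd (s n) t"])
        (use s t in \<open>simp_all add: Obar_iff obar_agree_def\<close>)
  next
    fix t
    assume "t \<notin> I"
    then have "fst (s n) t = (\<lambda>_. 0)" for n
      using s[of n] by (simp add: Obar_iff)
    then show "fst x t = (\<lambda>_. 0)"
      by (simp add: x_def)
  next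
    fix t
    assume "t \<notin> J"
    then have "snd (s n) t = (\<lambda>_. 0)" for n
      using s[of n] by (simp add: Obar_iff)
    then show "snd x t = (\<lambda>_. 0)"
      by (simp add: x_def)
  qed
  moreover have "\<forall>k. obar_agree I J k x (s k)"
    by (simp add: x_def obar_agree_def)
  ultimately show ?thesis
    by blast
qed

lemma obar_livsic_setting:
  assumes "finite I" "finite J" and K: "complete_nonarch_field abv"
    and f_cont: "obar_continuous I J piZ piA abv f" and f_nonzero: "\<forall>x\<in>Ob. f x \<noteq> 0"
    and orbit: "\<And>y L N. y \<in> Ob \<Longrightarrow> N < L \<Longrightarrow> (\<Prod>j<L. f ((phi ^^ j) (per L N y))) = 1"
  shows "livsic_setting abv Ob phi (obar_agree I J) per obar_zero f"
proof unfold_locales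
  show "nonarch_abs abv" "abv_complete abv"
    using K by (simp_all add: complete_nonarch_field_def)
  show "f obar_zero = 1"
    using orbit[OF obar_zero_in, of 0 1] by (simp add: obar_periodic_zero)
  show "\<exists>R. finite R \<and> R \<subseteq> Ob \<and> (\<forall>x\<in>Ob. \<exists>r\<in>R. obar_agree I J k x r)" for k
    using obar_finite_classes assms(1,2) .
  show "\<exists>N. \<forall>y\<in>Ob. obar_agree I J N y x \<longrightarrow> abv (f y - f x) < \<epsilon>" if "x \<in> Ob" "0 < \<epsilon>" for x \<epsilon>
    using f_cont that unfolding obar_continuous_def obar_agree_def by blast
  show "\<And>s. (\<And>k. s k \<in> Ob \<and> obar_agree I J k (s (Suc k)) (s k)) \<Longrightarrow>
      \<exists>x\<in>Ob. \<forall>k. obar_agree I J k x (s k)"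
    by (rule obar_limit)
  show "\<And>y N L. y \<in> Ob \<Longrightarrow> Suc N < L \<Longrightarrow>
      obar_agree I J (L - 1) ((phi ^^ Suc N) (per L N y)) ((phi ^^ Suc N) (per L (Suc N) y))"
    by (rule obar_periodic_Suc)
  show "\<And>y N L. y \<in> Ob \<Longrightarrow> 1 \<le> N \<Longrightarrow> N < L \<Longrightarrow>
      obar_agree I J (L - 1) (phi (per L N y)) (per L (N - 1) (phi y))"
    by (rule obar_periodic_shift)
qed (simp_all add: f_nonzero orbit obar_phi_in obar_zero_in obar_agree_0 obar_agree_mono
    obar_agree_iterate obar_periodic_in obar_periodic_agree obar_periodic_local
    obar_periodic_change_period obar_periodic_zero_block,
    (auto simp: obar_agree_def)[2])

theorem obar_livsic:
  assumes "finite I" "finite J" and K: "complete_nonarch_field abv"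
    and f_cont: "obar_continuous I J piZ piA abv f" and f_nonzero: "\<forall>x\<in>Ob. f x \<noteq> 0"
    and orbit: "\<And>y L N. y \<in> Ob \<Longrightarrow> N < L \<Longrightarrow> (\<Prod>j<L. f ((phi ^^ j) (per L N y))) = 1"
  shows "\<exists>G. obar_continuous I J piZ piA abv G \<and> (\<forall>x\<in>Ob. G x \<noteq> 0) \<and> (\<forall>x\<in>Ob. G x = f x * G (phi x))"
proof -
  interpret livsic_setting abv Ob phi "obar_agree I J" per obar_zero f
    by (rule obar_livsic_setting[OF assms])
  have "obar_continuous I J piZ piA abv G"
    using G_continuous unfolding obar_continuous_def obar_agree_def by blast
  then show ?thesis
    using G_nonzero G_eq_f_mult_G_T by blast
qed

lemma obar_orbit_condition:
  assumes per_hyp: "\<forall>(n::nat) x. x \<in> Ob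
                 \<and> (\<forall>t\<in>I. small_Z (piZ t) (fst x t))
                 \<and> (\<forall>t\<in>J. small_A (piA t) (snd x t))
                 \<and> (phi ^^ n) (neg x) = neg x
               \<longrightarrow> (\<Prod>j<n. F (neg ((phi ^^ j) (neg x)))) = 1"
    and y: "y \<in> Ob" and N: "N < L"
  shows "(\<Prod>j<L. F (neg ((phi ^^ j) (per L N y)))) = 1"
proof -
  have p: "per L N y \<in> Ob"
    using obar_periodic_in[OF y] N by simp
  then have "neg (neg (per L N y)) = per L N y"
    by (rule obar_neg_neg)
  then show ?thesis
    using per_hyp[rule_format, of "neg (per L N y)" L] obar_neg_in[OF p]
      obar_periodic_small[OF y N] obar_periodic_period[OF y N] by simp
qed

theorem obar_livsic_twisted:
  assumes "finite I" "finite J" and K: "complete_nonarch_field abv"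
    and F_cont: "obar_continuous I J piZ piA abv F" and F_nonzero: "\<forall>x\<in>Ob. F x \<noteq> 0"
    and orbit: "\<And>y L N. y \<in> Ob \<Longrightarrow> N < L \<Longrightarrow> (\<Prod>j<L. F (neg ((phi ^^ j) (per L N y)))) = 1"
  shows "\<exists>G. obar_continuous I J piZ piA abv G \<and> (\<forall>x\<in>Ob. G x \<noteq> 0)
           \<and> (\<forall>x\<in>Ob. F x = G x / G (neg (phi (neg x))))"
proof -
  have "obar_continuous I J piZ piA abv (\<lambda>x. F (neg x))"
    by (rule obar_continuous_comp_neg[OF F_cont obar_neg_in])
  moreover have "\<forall>x\<in>Ob. F (neg x) \<noteq> 0"
    using F_nonzero obar_neg_in by blast
  ultimately obtain G where G: "obar_continuous I J piZ piA abv G" "\<forall>x\<in>Ob. G x \<noteq> 0"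
      "\<forall>x\<in>Ob. G x = F (neg x) * G (phi x)"
    using obar_livsic[OF assms(1-3) _ _ orbit] by blast
  show ?thesis
  proof (intro exI[of _ "\<lambda>x. G (neg x)"] conjI ballI)
    show "obar_continuous I J piZ piA abv (\<lambda>x. G (neg x))"
      by (rule obar_continuous_comp_neg[OF G(1) obar_neg_in])
    fix x
    assume x: "x \<in> Ob"
    show "G (neg x) \<noteq> 0"
      using G(2) obar_neg_in[OF x] by blast
    have y: "phi (neg x) \<in> Ob"
      using obar_phi_in[OF obar_neg_in[OF x]] .
    have "G (neg x) = F x * G (phi (neg x))"
      using G(3)[rule_format, OF obar_neg_in[OF x]] obar_neg_neg[OF x] by simp
    moreover have "G (neg (neg (phi (neg x)))) = G (phi (neg x))"
      using obar_neg_neg[OF y] by simp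
    moreover have "G (phi (neg x)) \<noteq> 0"
      using G(2) y by blast
    ultimately show "F x = G (neg x) / G (neg (neg (phi (neg x))))"
      by simp
  qed
qed

end

theorem mainTheorem3:
  fixes I J :: "nat set"
    and piZ :: "nat \<Rightarrow> int"
    and piA :: "nat \<Rightarrow> 'f::{finite,field} poly"
    and abv :: "'k::field \<Rightarrow> real"
    and F :: "'f obar \<Rightarrow> 'k"
  assumes "finite I" and "finite J"
    and piZ: "\<forall>t\<in>I. \<exists>p::nat. \<exists>e::nat. prime p \<and> e > 0 \<and> piZ t = int p ^ e"
    and piA: "\<forall>t\<in>J. \<exists>v e. lead_coeff v = 1 \<and> irreducible v \<and> e > 0 \<and> piA t = v ^ e"
    and K: "complete_nonarch_field abv"
    and Fcont: "obar_continuous I J piZ piA abv F"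
    and Fnz: "\<forall>x\<in>Obar I J piZ piA. F x \<noteq> 0"
    and per: "\<forall>(n::nat) x. x \<in> Obar I J piZ piA
                 \<and> (\<forall>t\<in>I. small_Z (piZ t) (fst x t))
                 \<and> (\<forall>t\<in>J. small_A (piA t) (snd x t))
                 \<and> (obar_phi piZ piA ^^ n) (obar_neg piZ piA x) = obar_neg piZ piA x
               \<longrightarrow> (\<Prod>j<n. F (obar_neg piZ piA ((obar_phi piZ piA ^^ j) (obar_neg piZ piA x)))) = 1"
  shows "\<exists>G :: 'f obar \<Rightarrow> 'k.
           obar_continuous I J piZ piA abv G
         \<and> (\<forall>x\<in>Obar I J piZ piA. G x \<noteq> 0)
         \<and> (\<forall>x\<in>Obar I J piZ piA.
              F x = G x / G (obar_neg piZ piA (obar_phi piZ piA (obar_neg piZ piA x))))"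
proof -
  have piZ_gt_1: "\<forall>t\<in>I. piZ t > 1"
  proof
    fix t
    assume "t \<in> I"
    then obtain p e where "prime p" "0 < e" "piZ t = int p ^ e"
      using piZ by blast
    then show "piZ t > 1"
      by (simp add: prime_power_gt_1)
  qed
  have piA_degree: "\<forall>t\<in>J. degree (piA t) > 0"
  proof
    fix t
    assume "t \<in> J"
    then obtain v e where "irreducible v" "0 < e" "piA t = v ^ e"
      using piA by blast
    then show "degree (piA t) > 0"
      by (simp add: degree_irreducible_power_pos)
  qed
  show ?thesis
    by (rule obar_livsic_twisted[OF piZ_gt_1 piA_degree \<open>finite I\<close> \<open>finite J\<close> K Fcont Fnz
          obar_orbit_condition[OF piZ_gt_1 piA_degree per]])
qed

end
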